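(* Suppose $d=3$ and let $\Pi\subseteq\Sigma$. The cones $\sigma^1_\Pi$ and $\sigma^2_\Pi$ intersect nontrivially (i.e. $\sigma^1_\Pi\cap\sigma^2_\Pi\ne\{0\}$) if and only if $\Pi$ consists of more than one interval. In that case $\sigma_\Pi=N_\mathbb{R}$.
   Context: $N\cong\mathbb{Z}^3$, $\sigma\subset N_\mathbb{R}$ a strongly convex rational polyhedral cone of dimension $3$, $\Sigma=\sigma(1)$ its set of rays with primitive generators $n(\rho)$. The rays carry a cyclic order in which two rays are adjacent iff they span a $2$-dimensional face of $\sigma$ (equivalently, the cyclic order of the vertices $\rho\cap H$ of the polygon $\sigma\cap H$ for an affine hyperplane $H$ meeting $\sigma$ in a bounded polygon). "$\Pi$ consists of more than one interval" means that $\Pi$, viewed as a set of vertices of this cycle, decomposes into more than one maximal block of cyclically consecutive rays. $\sigma^1_\Pi=\operatorname{cone}(n(\rho):\rho\in\Pi)$, $\sigma^2_\Pi=\operatorname{cone}(n(\rho):\rho\in\Sigma\setminus\Pi)$, and $\sigma_\Pi=\operatorname{cone}(-n(\rho):\rho\in\Pi;\ n(\rho):\rho\in\Sigma\setminus\Pi)$, all cones over $\mathbb{R}_{\ge0}$. *)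

theory Defs
  imports "HOL-Analysis.Analysis"
begin

definition lattice_pt :: "real^3 \<Rightarrow> bool" where
  "lattice_pt x \<longleftrightarrow> (\<forall>i. x $ i \<in> \<int>)"

text \<open>cone(S) over R_{>=0}: all finite nonnegative combinations (cone of the empty set is {0}).\<close>
definition pos_cone :: "(real^3) set \<Rightarrow> (real^3) set" where
  "pos_cone S = {x. \<exists>T c. finite T \<and> T \<subseteq> S \<and> (\<forall>v\<in>T. 0 \<le> c v) \<and> x = (\<Sum>v\<in>T. c v *\<^sub>R v)}"

definition full_sc_rat_poly_cone :: "(real^3) set \<Rightarrow> bool" where
  "full_sc_rat_poly_cone \<sigma> \<longleftrightarrow>
     (\<exists>S. finite S \<and> (\<forall>v\<in>S. lattice_pt v) \<and> \<sigma> = pos_cone S)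
     \<and> \<sigma> \<inter> uminus ` \<sigma> = {0}
     \<and> aff_dim \<sigma> = 3"

definition rays :: "(real^3) set \<Rightarrow> (real^3) set set" where
  "rays \<sigma> = {\<rho>. \<rho> face_of \<sigma> \<and> aff_dim \<rho> = 1}"

definition prim_gen :: "(real^3) set \<Rightarrow> real^3" where
  "prim_gen \<rho> = (THE v. v \<in> \<rho> \<and> lattice_pt v \<and> v \<noteq> 0 \<and>
      (\<forall>w\<in>\<rho>. lattice_pt w \<and> w \<noteq> 0 \<longrightarrow> (\<exists>k::nat. w = real k *\<^sub>R v)))"

definition adjacent_rays :: "(real^3) set \<Rightarrow> (real^3) set \<Rightarrow> (real^3) set \<Rightarrow> bool" where
  "adjacent_rays \<sigma> \<rho> \<rho>' \<longleftrightarrow> \<rho> \<in> rays \<sigma> \<and> \<rho>' \<in> rays \<sigma> \<and> \<rho> \<noteq> \<rho>' \<and>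
     pos_cone (\<rho> \<union> \<rho>') face_of \<sigma> \<and> aff_dim (pos_cone (\<rho> \<union> \<rho>')) = 2"

text \<open>Pi consists of more than one interval: the subgraph of the cycle of rays induced
  on Pi has more than one connected component (maximal block of consecutive rays).\<close>
definition more_than_one_interval :: "(real^3) set \<Rightarrow> (real^3) set set \<Rightarrow> bool" where
  "more_than_one_interval \<sigma> P \<longleftrightarrow>
     (\<exists>a\<in>P. \<exists>b\<in>P. (a, b) \<notin> {(x, y). x \<in> P \<and> y \<in> P \<and> adjacent_rays \<sigma> x y}\<^sup>*)"

definition sigma1 :: "(real^3) set \<Rightarrow> (real^3) set set \<Rightarrow> (real^3) set" where
  "sigma1 \<sigma> P = pos_cone (prim_gen ` P)"

definition sigma2 :: "(real^3) set \<Rightarrow> (real^3) set set \<Rightarrow> (real^3) set" where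
  "sigma2 \<sigma> P = pos_cone (prim_gen ` (rays \<sigma> - P))"

definition sigmaPi :: "(real^3) set \<Rightarrow> (real^3) set set \<Rightarrow> (real^3) set" where
  "sigmaPi \<sigma> P = pos_cone ((\<lambda>\<rho>. - prim_gen \<rho>) ` P \<union> prim_gen ` (rays \<sigma> - P))"

end

theory Submission
  imports Defs
begin

text \<open>
  The primitive generators of the rays of \<sigma> form a finite set of vectors spanning a pointed cone
  in which no generator lies in the cone spanned by the others. For such generators a vanishing
  combination with at most one coefficient of the wrong sign is trivial. Together with the
  four-vector identity for 3 by 3 determinants this makes det(g0, u, v) > 0 a strict total order
  on the generators other than g0; listing them in this order gives a cyclic enumeration
  e0, ..., e(n-1) with det(ei, ej, ek) > 0 for i < j < k. Two rays span a two-dimensional face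
  exactly when all other generators lie strictly on one side of their plane, that is, when they
  are cyclically consecutive.

  If \<Pi> and its complement interleave at indices i < j < k < l, the identity
  det(ei, ek, el) ej + det(ei, ej, ek) el = det(ei, ej, el) ek + det(ej, ek, el) ei
  has positive coefficients. It yields a common nonzero point of the two cones spanned by \<Pi>
  and by its complement, and it puts ei, ej, ek together with their negatives into the cone
  \<sigma>_\<Pi>, which is therefore everything; the indices j and l missing from \<Pi> separate ei
  from ek. Otherwise \<Pi> or its complement is a run ep, ..., eq of consecutive generators: \<Pi>
  is then connected, and the plane through ep and eq separates the two cones.
\<close>

definition det3 :: "real^3 \<Rightarrow> real^3 \<Rightarrow> real^3 \<Rightarrow> real" where
  "det3 a b c = cross3 a b \<bullet> c"

lemma det3_expand:
  "det3 a b c = a$1 * (b$2 * c$3 - b$3 * c$2) - a$2 * (b$1 * c$3 - b$3 * c$1) + a$3 * (b$1 * c$2 - b$2 * c$1)"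
  by (simp add: det3_def cross3_def inner_vec_def sum_3 vector_def algebra_simps)

lemma det3_swap12: "det3 b a c = - det3 a b c"
  and det3_swap23: "det3 a c b = - det3 a b c"
  and det3_cycle: "det3 b c a = det3 a b c"
  and det3_same: "det3 a a c = 0" "det3 a b b = 0" "det3 a b a = 0"
  by (simp_all add: det3_expand algebra_simps)

lemma det3_four_vectors:
  "det3 a c d *\<^sub>R b + det3 a b c *\<^sub>R d = det3 a b d *\<^sub>R c + det3 b c d *\<^sub>R a"
  by (simp add: det3_expand vec_eq_iff forall_3 algebra_simps)

lemma det3_cramer:
  "det3 a b c *\<^sub>R y = det3 y b c *\<^sub>R a + det3 a y c *\<^sub>R b + det3 a b y *\<^sub>R c"
  by (simp add: det3_expand vec_eq_iff forall_3 algebra_simps)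

section \<open>Finitely generated cones\<close>

lemma pos_cone_eq_convex_cone_hull: "pos_cone S = convex_cone hull S"
proof
  show "pos_cone S \<subseteq> convex_cone hull S"
  proof
    fix x assume "x \<in> pos_cone S"
    then obtain T c where "finite T" "T \<subseteq> S" "\<forall>v\<in>T. 0 \<le> c v" "x = (\<Sum>v\<in>T. c v *\<^sub>R v)"
      unfolding pos_cone_def by blast
    then show "x \<in> convex_cone hull S"
      by (induction T arbitrary: x rule: finite_induct)
        (auto intro!: convex_cone_hull_add convex_cone_hull_mul[OF hull_inc] simp: convex_cone_hull_contains_0)
  qed
  show "convex_cone hull S \<subseteq> pos_cone S"
  proof (cases "S = {}")
    case True
    then show ?thesis
      unfolding pos_cone_def by (auto intro!: exI[of _ "{}"])
  next
    case False
    show ?thesis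
    proof
      fix x assume "x \<in> convex_cone hull S"
      then obtain y t where y: "y \<in> convex hull S" and t: "0 \<le> t" "x = t *\<^sub>R y"
        using False by (auto simp: convex_cone_hull_convex_hull_nonempty)
      then obtain T u where "finite T" "T \<subseteq> S" "\<forall>v\<in>T. 0 \<le> u v" "y = (\<Sum>v\<in>T. u v *\<^sub>R v)"
        unfolding convex_hull_explicit by blast
      then show "x \<in> pos_cone S"
        unfolding pos_cone_def using t
        by (intro CollectI exI[of _ T] exI[of _ "\<lambda>v. t * u v"]) (auto simp: scaleR_sum_right)
    qed
  qed
qed

lemma convex_cone_pos_cone: "convex_cone (pos_cone S)"
  by (simp add: pos_cone_eq_convex_cone_hull convex_cone_convex_cone_hull)

lemma zero_in_pos_cone: "0 \<in> pos_cone S"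
  by (simp add: pos_cone_eq_convex_cone_hull convex_cone_hull_contains_0)

lemma pos_cone_empty [simp]: "pos_cone {} = {0}"
  by (simp add: pos_cone_eq_convex_cone_hull)

lemma in_pos_cone: "x \<in> S \<Longrightarrow> x \<in> pos_cone S"
  by (simp add: pos_cone_eq_convex_cone_hull hull_inc)

lemma pos_cone_mono: "S \<subseteq> T \<Longrightarrow> pos_cone S \<subseteq> pos_cone T"
  by (simp add: pos_cone_eq_convex_cone_hull hull_mono)

lemma pos_cone_minimal: "S \<subseteq> pos_cone T \<Longrightarrow> pos_cone S \<subseteq> pos_cone T"
  by (simp add: pos_cone_eq_convex_cone_hull hull_minimal convex_cone_convex_cone_hull)

lemma pos_cone_add: "x \<in> pos_cone S \<Longrightarrow> y \<in> pos_cone S \<Longrightarrow> x + y \<in> pos_cone S"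
  by (simp add: pos_cone_eq_convex_cone_hull convex_cone_hull_add)

lemma pos_cone_scaleR: "x \<in> pos_cone S \<Longrightarrow> 0 \<le> t \<Longrightarrow> t *\<^sub>R x \<in> pos_cone S"
  by (simp add: pos_cone_eq_convex_cone_hull convex_cone_hull_mul)

lemma scaleR_in_pos_cone: "x \<in> S \<Longrightarrow> 0 \<le> t \<Longrightarrow> t *\<^sub>R x \<in> pos_cone S"
  by (simp add: in_pos_cone pos_cone_scaleR)

lemma pos_cone_sum:
  "finite I \<Longrightarrow> (\<And>i. i \<in> I \<Longrightarrow> f i \<in> pos_cone S) \<Longrightarrow> (\<Sum>i\<in>I. f i) \<in> pos_cone S"
  by (induction I rule: finite_induct) (auto intro: zero_in_pos_cone pos_cone_add)

lemma pos_cone_subset_span: "pos_cone S \<subseteq> span S"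
  by (simp add: pos_cone_eq_convex_cone_hull hull_minimal convex_cone_span span_superset)

lemma aff_dim_pos_cone: "aff_dim (pos_cone S) = int (dim S)"
proof -
  have "span (pos_cone S) = span S"
    unfolding span_eq using pos_cone_subset_span in_pos_cone by (auto intro: span_base)
  then have "dim (pos_cone S) = dim S"
    by (metis dim_span)
  then show ?thesis
    by (simp add: aff_dim_zero hull_inc zero_in_pos_cone)
qed

lemma mem_pos_cone_image:
  assumes "finite R" "inj_on g R"
  shows "x \<in> pos_cone (g ` R) \<longleftrightarrow> (\<exists>c. (\<forall>r\<in>R. 0 \<le> c r) \<and> x = (\<Sum>r\<in>R. c r *\<^sub>R g r))"
proof
  assume "x \<in> pos_cone (g ` R)"
  then obtain T c where T: "finite T" "T \<subseteq> g ` R" "\<forall>v\<in>T. 0 \<le> c v" "x = (\<Sum>v\<in>T. c v *\<^sub>R v)"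
    unfolding pos_cone_def by blast
  define c' where "c' r = (if g r \<in> T then c (g r) else 0)" for r
  have "x = (\<Sum>v\<in>g ` R. (if v \<in> T then c v else 0) *\<^sub>R v)"
    unfolding T(4) using T(2) assms(1) by (intro sum.mono_neutral_cong_left) auto
  also have "\<dots> = (\<Sum>r\<in>R. c' r *\<^sub>R g r)"
    by (simp add: sum.reindex[OF assms(2)] c'_def)
  finally show "\<exists>c. (\<forall>r\<in>R. 0 \<le> c r) \<and> x = (\<Sum>r\<in>R. c r *\<^sub>R g r)"
    using T(3) by (intro exI[of _ c']) (auto simp: c'_def)
next
  assume "\<exists>c. (\<forall>r\<in>R. 0 \<le> c r) \<and> x = (\<Sum>r\<in>R. c r *\<^sub>R g r)"
  then show "x \<in> pos_cone (g ` R)"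
    using assms(1) by (auto intro!: pos_cone_sum scaleR_in_pos_cone)
qed

lemma pos_cone_inner_nonneg:
  assumes "\<forall>x\<in>X. 0 \<le> u \<bullet> x" "y \<in> pos_cone X"
  shows "0 \<le> u \<bullet> y"
proof -
  have "pos_cone X \<subseteq> {y. 0 \<le> u \<bullet> y}"
    unfolding pos_cone_eq_convex_cone_hull
    using assms(1) by (intro hull_minimal convex_cone_halfspace_ge) auto
  then show ?thesis
    using assms(2) by blast
qed

lemma pos_cone_Int_hyperplane:
  assumes nonneg: "\<forall>x\<in>X. 0 \<le> u \<bullet> x"
  shows "pos_cone X \<inter> {y. u \<bullet> y = 0} = pos_cone {x\<in>X. u \<bullet> x = 0}"
proof
  have "pos_cone {x\<in>X. u \<bullet> x = 0} \<subseteq> {y. u \<bullet> y = 0}"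
    unfolding pos_cone_eq_convex_cone_hull
    by (rule hull_minimal) (auto simp: subspace_imp_convex_cone subspace_hyperplane)
  then show "pos_cone {x\<in>X. u \<bullet> x = 0} \<subseteq> pos_cone X \<inter> {y. u \<bullet> y = 0}"
    using pos_cone_mono[of "{x\<in>X. u \<bullet> x = 0}" X] by blast
  show "pos_cone X \<inter> {y. u \<bullet> y = 0} \<subseteq> pos_cone {x\<in>X. u \<bullet> x = 0}"
  proof
    fix y assume y: "y \<in> pos_cone X \<inter> {y. u \<bullet> y = 0}"
    then obtain T c where T: "finite T" "T \<subseteq> X" "\<forall>v\<in>T. 0 \<le> c v" "y = (\<Sum>v\<in>T. c v *\<^sub>R v)"
      unfolding pos_cone_def by blast
    have terms_nonneg: "\<forall>v\<in>T. 0 \<le> c v * (u \<bullet> v)"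
      using T(2,3) nonneg by (meson mult_nonneg_nonneg subsetD)
    have "(\<Sum>v\<in>T. c v * (u \<bullet> v)) = 0"
      using y by (simp add: T(4) inner_sum_right)
    then have "\<forall>v\<in>T. c v * (u \<bullet> v) = 0"
      by (simp add: sum_nonneg_eq_0_iff[OF T(1)] terms_nonneg)
    then have "y = (\<Sum>v\<in>{v\<in>T. u \<bullet> v = 0}. c v *\<^sub>R v)"
      unfolding T(4) using T(1) by (intro sum.mono_neutral_right) auto
    also have "\<dots> \<in> pos_cone {x\<in>X. u \<bullet> x = 0}"
      using T by (intro pos_cone_sum scaleR_in_pos_cone) auto
    finally show "y \<in> pos_cone {x\<in>X. u \<bullet> x = 0}" .
  qed
qed

lemma pos_cone_Int_separated:
  assumes "\<forall>x\<in>X. u \<bullet> x \<le> 0" "\<forall>y\<in>Y. 0 < u \<bullet> y"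
  shows "pos_cone X \<inter> pos_cone Y = {0}"
proof -
  have Y_nonneg: "\<forall>y\<in>Y. 0 \<le> u \<bullet> y"
    using assms(2) less_imp_le by blast
  have Y_off: "{y\<in>Y. u \<bullet> y = 0} = {}"
    using assms(2) by auto
  have Y_trivial: "pos_cone Y \<inter> {y. u \<bullet> y = 0} = {0}"
    unfolding pos_cone_Int_hyperplane[OF Y_nonneg] Y_off by simp
  have "z = 0" if z: "z \<in> pos_cone X" "z \<in> pos_cone Y" for z
  proof -
    have "0 \<le> (- u) \<bullet> z"
      using assms(1) z(1) by (intro pos_cone_inner_nonneg[of X]) auto
    moreover have "0 \<le> u \<bullet> z"
      using Y_nonneg z(2) by (rule pos_cone_inner_nonneg)
    ultimately show "z = 0"
      using z(2) Y_trivial by auto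
  qed
  then show ?thesis
    using zero_in_pos_cone by blast
qed

lemma convex_pos_cone: "convex (pos_cone S)"
  using convex_cone_pos_cone by (simp add: convex_cone_def)

lemma face_of_pos_cone_hyperplane:
  assumes "\<forall>x\<in>X. 0 \<le> u \<bullet> x"
  shows "pos_cone {x\<in>X. u \<bullet> x = 0} face_of pos_cone X"
  using face_of_Int_supporting_hyperplane_ge[where S="pos_cone X" and a=u and b=0] assms
  by (simp add: pos_cone_Int_hyperplane pos_cone_inner_nonneg convex_pos_cone)

lemma face_of_convex_cone_scaleR:
  assumes C: "convex_cone C" and F: "F face_of C" and z: "z \<in> F" and t: "0 \<le> t"
  shows "t *\<^sub>R z \<in> F"
proof -
  have zC: "z \<in> C"
    using F z face_of_imp_subset by blast
  consider "z = 0 \<or> t = 1" | "z \<noteq> 0" "t < 1" | "z \<noteq> 0" "1 < t"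
    by linarith
  then show ?thesis
  proof cases
    case 1
    then show ?thesis using z by auto
  next
    case 2
    have "z = (1 - 1/2) *\<^sub>R (t *\<^sub>R z) + (1/2) *\<^sub>R ((2 - t) *\<^sub>R z)"
      by (simp add: algebra_simps flip: scaleR_add_left)
    moreover have "t *\<^sub>R z \<noteq> (2 - t) *\<^sub>R z"
      using 2 by (simp add: scaleR_cancel_right)
    ultimately have "z \<in> open_segment (t *\<^sub>R z) ((2 - t) *\<^sub>R z)"
      unfolding in_segment by (intro conjI exI[of _ "1/2"]) auto
    moreover have "t *\<^sub>R z \<in> C" "(2 - t) *\<^sub>R z \<in> C"
      using C zC t 2 by (auto intro: convex_cone_scaleR)
    ultimately show ?thesis
      using face_ofD[OF F] z by blast
  next
    case 3
    then have "z \<in> open_segment 0 (t *\<^sub>R z)"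
      unfolding in_segment by (intro conjI exI[of _ "1/t"]) auto
    moreover have "0 \<in> C" "t *\<^sub>R z \<in> C"
      using C zC t by (auto intro: convex_cone_scaleR convex_cone_contains_0)
    ultimately show ?thesis
      using face_ofD[OF F] z by blast
  qed
qed

lemma face_of_convex_cone_add:
  assumes C: "convex_cone C" and F: "F face_of C" and yz: "y \<in> C" "z \<in> C" "y + z \<in> F"
  shows "y \<in> F"
proof (cases "y = z")
  case True
  then show ?thesis
    using face_of_convex_cone_scaleR[OF C F yz(3), of "1/2"] by (simp add: scaleR_2[symmetric])
next
  case False
  then have "y + z \<in> open_segment (2 *\<^sub>R y) (2 *\<^sub>R z)"
    unfolding in_segment by (intro conjI exI[of _ "1/2"]) (auto simp: algebra_simps)
  moreover have "2 *\<^sub>R y \<in> C" "2 *\<^sub>R z \<in> C"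
    using C yz by (auto intro: convex_cone_scaleR)
  ultimately have "2 *\<^sub>R y \<in> F"
    using face_ofD[OF F] yz(3) by blast
  then show ?thesis
    using face_of_convex_cone_scaleR[OF C F, of "2 *\<^sub>R y" "1/2"] by simp
qed

lemma face_of_pos_cone_contains_generator:
  assumes S: "finite S" and F: "F face_of pos_cone S" and x: "x \<in> F" "x \<noteq> 0"
  shows "\<exists>v\<in>S. v \<in> F"
proof -
  have C: "convex_cone (pos_cone S)"
    by (rule convex_cone_pos_cone)
  have "x \<in> pos_cone S"
    using x F face_of_imp_subset by blast
  then obtain c where c: "\<forall>v\<in>S. 0 \<le> c v" "x = (\<Sum>v\<in>S. c v *\<^sub>R v)"
    using mem_pos_cone_image[OF S inj_on_id] by auto
  have "\<exists>v\<in>S. c v \<noteq> 0"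
  proof (rule ccontr)
    assume "\<not> ?thesis"
    then have "x = 0"
      using c(2) by simp
    then show False
      using x(2) by simp
  qed
  then obtain v where v: "v \<in> S" "0 < c v"
    using c(1) by (auto simp: order_le_less)
  have "x = c v *\<^sub>R v + (\<Sum>w\<in>S-{v}. c w *\<^sub>R w)"
    unfolding c(2) by (rule sum.remove[OF S v(1)])
  then have sum_in_F: "c v *\<^sub>R v + (\<Sum>w\<in>S-{v}. c w *\<^sub>R w) \<in> F"
    using x(1) by simp
  have "c v *\<^sub>R v \<in> pos_cone S"
    using v by (intro scaleR_in_pos_cone) auto
  moreover have "(\<Sum>w\<in>S-{v}. c w *\<^sub>R w) \<in> pos_cone S"
    using S c(1) by (intro pos_cone_sum scaleR_in_pos_cone) auto
  ultimately have "c v *\<^sub>R v \<in> F"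
    using face_of_convex_cone_add[OF C F _ _ sum_in_F] by blast
  then have "(1 / c v) *\<^sub>R (c v *\<^sub>R v) \<in> F"
    by (rule face_of_convex_cone_scaleR[OF C F]) (use v in simp)
  then have "v \<in> F"
    using v(2) by simp
  then show ?thesis
    using v(1) ..
qed

lemma convex_cone_flip:
  assumes "convex_cone C" "0 < \<gamma>" "0 \<le> \<alpha>" "0 \<le> \<beta>" "0 \<le> \<delta>"
    and eq: "\<alpha> *\<^sub>R a + \<beta> *\<^sub>R b = \<gamma> *\<^sub>R c + \<delta> *\<^sub>R d"
    and "a \<in> C" "b \<in> C" "- d \<in> C"
  shows "c \<in> C"
proof -
  have "c = (1 / \<gamma>) *\<^sub>R (\<alpha> *\<^sub>R a + \<beta> *\<^sub>R b + \<delta> *\<^sub>R (- d))"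
    using assms(2) by (simp add: eq algebra_simps)
  also have "\<dots> \<in> C"
    using assms by (intro convex_cone_scaleR convex_cone_add) auto
  finally show ?thesis .
qed

lemma convex_cone_eq_UNIV:
  assumes C: "convex_cone C" and lines: "\<And>x. x \<in> {u, v, w} \<Longrightarrow> x \<in> C \<and> - x \<in> C"
    and d: "det3 u v w \<noteq> 0"
  shows "C = UNIV"
proof -
  have line: "c *\<^sub>R x \<in> C" if "x \<in> {u, v, w}" for c x
  proof (cases "0 \<le> c")
    case True
    then show ?thesis using lines[OF that] C by (auto intro: convex_cone_scaleR)
  next
    case False
    then show ?thesis
      using convex_cone_scaleR[OF C, of "- c" "- x"] lines[OF that] by simp
  qed
  have "y \<in> C" for y
  proof -
    have "y = (1 / det3 u v w) *\<^sub>R (det3 u v w *\<^sub>R y)"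
      using d by simp
    also have "\<dots> = (det3 y v w / det3 u v w) *\<^sub>R u + (det3 u y w / det3 u v w) *\<^sub>R v
        + (det3 u v y / det3 u v w) *\<^sub>R w"
      by (subst det3_cramer) (simp add: scaleR_add_right)
    also have "\<dots> \<in> C"
      using C by (intro convex_cone_add line) auto
    finally show ?thesis .
  qed
  then show ?thesis
    by auto
qed

lemma pos_cone_split:
  assumes "finite S" "s \<in> S" "x \<in> pos_cone S"
  obtains c w where "0 \<le> c" "w \<in> pos_cone (S - {s})" "x = c *\<^sub>R s + w"
proof -
  obtain c where c: "\<forall>v\<in>S. 0 \<le> c v" "x = (\<Sum>v\<in>S. c v *\<^sub>R v)"
    using assms(3) mem_pos_cone_image[OF assms(1) inj_on_id] by auto
  have "x = c s *\<^sub>R s + (\<Sum>v\<in>S - {s}. c v *\<^sub>R v)"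
    unfolding c(2) by (rule sum.remove[OF assms(1,2)])
  moreover have "(\<Sum>v\<in>S - {s}. c v *\<^sub>R v) \<in> pos_cone (S - {s})"
    using c(1) assms(1) by (intro pos_cone_sum scaleR_in_pos_cone) auto
  ultimately show ?thesis
    using that c(1) assms(2) by blast
qed

lemma exists_irredundant_subset:
  assumes "finite S0"
  obtains S where "S \<subseteq> S0" "pos_cone S = pos_cone S0" "\<And>s. s \<in> S \<Longrightarrow> s \<notin> pos_cone (S - {s})"
proof -
  define Q where "Q T \<longleftrightarrow> T \<subseteq> S0 \<and> pos_cone T = pos_cone S0" for T
  obtain S where S: "Q S" and least: "\<And>T. Q T \<Longrightarrow> card S \<le> card T"
    using ex_has_least_nat[of Q S0 card] by (auto simp: Q_def)
  have fin: "finite S"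
    using S assms finite_subset by (auto simp: Q_def)
  have "s \<notin> pos_cone (S - {s})" if s: "s \<in> S" for s
  proof
    assume "s \<in> pos_cone (S - {s})"
    then have "S \<subseteq> pos_cone (S - {s})"
      by (auto intro: in_pos_cone)
    then have "pos_cone (S - {s}) = pos_cone S"
      using pos_cone_minimal pos_cone_mono[of "S - {s}" S] by blast
    then have "Q (S - {s})"
      using S by (auto simp: Q_def)
    then have "card S \<le> card (S - {s})"
      by (rule least)
    then show False
      using card_Diff1_less[OF fin s] by simp
  qed
  then show ?thesis
    using that S by (auto simp: Q_def)
qed

lemma strict_total_order_enumeration:
  assumes A: "finite A"
    and trans: "\<And>x y z. x \<in> A \<Longrightarrow> y \<in> A \<Longrightarrow> z \<in> A \<Longrightarrow> prec x y \<Longrightarrow> prec y z \<Longrightarrow> prec x z"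
    and total: "\<And>x y. x \<in> A \<Longrightarrow> y \<in> A \<Longrightarrow> x \<noteq> y \<Longrightarrow> prec x y \<or> prec y x"
    and irrefl: "\<And>x. x \<in> A \<Longrightarrow> \<not> prec x x"
  obtains e where "bij_betw e {..<card A} A" "\<And>i j. i < j \<Longrightarrow> j < card A \<Longrightarrow> prec (e i) (e j)"
proof -
  define rank where "rank x = card {y\<in>A. prec y x}" for x
  have rank_less: "rank x < rank y" if "x \<in> A" "y \<in> A" "prec x y" for x y
  proof -
    have "{z\<in>A. prec z x} \<subset> {z\<in>A. prec z y}"
      using that trans irrefl by blast
    then show ?thesis
      unfolding rank_def using A by (intro psubset_card_mono) auto
  qed
  have inj: "inj_on rank A"
    by (rule inj_onI) (metis rank_less total less_irrefl)
  have "rank ` A \<subseteq> {..<card A}"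
    unfolding rank_def using A irrefl by (auto intro!: psubset_card_mono)
  moreover have "card (rank ` A) = card A"
    by (rule card_image[OF inj])
  ultimately have "rank ` A = {..<card A}"
    by (intro card_subset_eq) auto
  then have bij: "bij_betw rank A {..<card A}"
    using inj by (simp add: bij_betw_def)
  define e where "e = the_inv_into A rank"
  have e: "bij_betw e {..<card A} A"
    unfolding e_def by (rule bij_betw_the_inv_into[OF bij])
  have "prec (e i) (e j)" if "i < j" "j < card A" for i j
  proof -
    have ij: "e i \<in> A" "e j \<in> A" "rank (e i) = i" "rank (e j) = j"
      using that e bij unfolding e_def
      by (auto simp: bij_betw_def f_the_inv_into_f the_inv_into_into)
    then show ?thesis
      using total[of "e i" "e j"] rank_less[of "e j" "e i"] that by force
  qed
  then show ?thesis
    using e that by blast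
qed

lemma bij_betw_prepend:
  assumes "bij_betw f {..<n} A" "a \<notin> A"
  shows "bij_betw (\<lambda>i. if i = 0 then a else f (i - 1)) {..<Suc n} (insert a A)"
proof -
  have "(\<lambda>i. if i = 0 then a else f (i - 1)) ` {..<Suc n} = insert a (f ` {..<n})"
    unfolding lessThan_Suc_eq_insert_0 image_insert image_image by simp
  then have "(\<lambda>i. if i = 0 then a else f (i - 1)) ` {..<Suc n} = insert a A"
    using assms(1) by (simp add: bij_betw_def)
  moreover have "card (insert a A) = Suc n"
    using assms bij_betw_same_card[OF assms(1)] bij_betw_finite[OF assms(1)] by simp
  ultimately show ?thesis
    by (simp add: bij_betw_def eq_card_imp_inj_on)
qed

section \<open>Pointed cones with extremal generators\<close>

locale extremal_generators =
  fixes R :: "'r set" and g :: "'r \<Rightarrow> real^3"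
  assumes finite_R: "finite R"
    and pointed: "\<And>x. x \<in> pos_cone (g ` R) \<Longrightarrow> - x \<in> pos_cone (g ` R) \<Longrightarrow> x = 0"
    and extremal: "\<And>r. r \<in> R \<Longrightarrow> g r \<notin> pos_cone (g ` (R - {r}))"
begin

abbreviation \<sigma> :: "(real^3) set" where "\<sigma> \<equiv> pos_cone (g ` R)"

lemma gen_nonzero: "r \<in> R \<Longrightarrow> g r \<noteq> 0"
  using extremal zero_in_pos_cone by metis

lemma inj_on_gen: "inj_on g R"
proof (rule inj_onI)
  fix r s assume rs: "r \<in> R" "s \<in> R" "g r = g s"
  show "r = s"
  proof (rule ccontr)
    assume "r \<noteq> s"
    then have "g r \<in> pos_cone (g ` (R - {r}))"
      using rs by (intro in_pos_cone) auto
    then show False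
      using extremal rs(1) by blast
  qed
qed

lemma scaleR_gen_in_pos_cone: "r \<in> A \<Longrightarrow> 0 \<le> t \<Longrightarrow> t *\<^sub>R g r \<in> pos_cone (g ` A)"
  by (simp add: scaleR_in_pos_cone)

lemma pos_cone_gens_subset: "A \<subseteq> R \<Longrightarrow> pos_cone (g ` A) \<subseteq> \<sigma>"
  by (simp add: image_mono pos_cone_mono)

lemma multiple_of_gen_in_cone_of_others:
  assumes s: "s \<in> R" and x: "x \<in> pos_cone (g ` (R - {s}))" and eq: "t *\<^sub>R g s = x"
  shows "t = 0 \<and> x = 0"
proof -
  have "t = 0"
  proof (rule ccontr)
    assume "t \<noteq> 0"
    then consider "0 < t" | "t < 0"
      by linarith
    then show False
    proof cases
      case 1
      then have "g s = (1 / t) *\<^sub>R x"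
        using eq by auto
      also have "\<dots> \<in> pos_cone (g ` (R - {s}))"
        using x 1 by (intro pos_cone_scaleR) auto
      finally show False
        using extremal s by blast
    next
      case 2
      have "x \<in> \<sigma>"
        using x pos_cone_gens_subset[of "R - {s}"] by blast
      moreover have "- x \<in> \<sigma>"
        using eq[symmetric] 2 s by (simp add: scaleR_gen_in_pos_cone flip: scaleR_minus_left)
      ultimately have "x = 0"
        by (rule pointed)
      then show False
        using eq 2 gen_nonzero[OF s] by simp
    qed
  qed
  then show ?thesis
    using eq by simp
qed

lemma gen_plus_cone_nonzero:
  assumes "r \<in> R" "0 < t" "y \<in> \<sigma>"
  shows "t *\<^sub>R g r + y \<noteq> 0"
proof
  assume "t *\<^sub>R g r + y = 0"
  then have "- (t *\<^sub>R g r) = y"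
    by (simp add: add_eq_0_iff)
  then have "t *\<^sub>R g r = 0"
    using pointed[of "t *\<^sub>R g r"] assms by (simp add: scaleR_gen_in_pos_cone)
  then show False
    using assms gen_nonzero by simp
qed

lemma cross3_gens_nonzero:
  assumes "r \<in> R" "s \<in> R" "r \<noteq> s"
  shows "cross3 (g r) (g s) \<noteq> 0"
proof
  assume "cross3 (g r) (g s) = 0"
  then have eq: "(g r \<bullet> g r) *\<^sub>R g s = (g r \<bullet> g s) *\<^sub>R g r"
    using Lagrange[of "g r" "g r" "g s"] by simp
  have pos: "0 < g r \<bullet> g r"
    using gen_nonzero assms by simp
  show False
  proof (cases "0 \<le> g r \<bullet> g s")
    case True
    then have "(g r \<bullet> g s) *\<^sub>R g r \<in> pos_cone (g ` (R - {s}))"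
      using assms by (intro scaleR_gen_in_pos_cone) auto
    then show False
      using multiple_of_gen_in_cone_of_others[OF assms(2) _ eq] pos by simp
  next
    case False
    have "(- (g r \<bullet> g s)) *\<^sub>R g r \<in> \<sigma>"
      using False assms(1) by (intro scaleR_gen_in_pos_cone) auto
    moreover have "(g r \<bullet> g r) *\<^sub>R g s + (- (g r \<bullet> g s)) *\<^sub>R g r = 0"
      using eq by simp
    ultimately show False
      using gen_plus_cone_nonzero[OF assms(2) pos] by blast
  qed
qed

lemma gen_notin_span_pair:
  assumes R: "r \<in> R" "r1 \<in> R" "r2 \<in> R" and ne: "r \<noteq> r1" "r \<noteq> r2" "r1 \<noteq> r2"
  shows "g r \<notin> span {g r1, g r2}"
proof
  assume "g r \<in> span {g r1, g r2}"
  then obtain p q where "g r - p *\<^sub>R g r1 = q *\<^sub>R g r2"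
    by (auto simp: span_insert span_singleton)
  then have eq: "1 *\<^sub>R g r = p *\<^sub>R g r1 + q *\<^sub>R g r2"
    by (simp add: algebra_simps)
  consider "0 \<le> p" "0 \<le> q" | "p < 0" | "q < 0"
    by linarith
  then show False
  proof cases
    case 1
    then have "p *\<^sub>R g r1 + q *\<^sub>R g r2 \<in> pos_cone (g ` (R - {r}))"
      using R ne by (intro pos_cone_add scaleR_gen_in_pos_cone) auto
    then show False
      using multiple_of_gen_in_cone_of_others[OF R(1) _ eq] by simp
  next
    case 2
    have "q *\<^sub>R g r2 = 1 *\<^sub>R g r + (- p) *\<^sub>R g r1"
      using eq by simp
    moreover have "1 *\<^sub>R g r + (- p) *\<^sub>R g r1 \<in> pos_cone (g ` (R - {r2}))"
      using R ne 2 by (intro pos_cone_add scaleR_gen_in_pos_cone) auto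
    ultimately have "1 *\<^sub>R g r + (- p) *\<^sub>R g r1 = 0"
      using multiple_of_gen_in_cone_of_others[OF R(3)] by blast
    moreover have "(- p) *\<^sub>R g r1 \<in> \<sigma>"
      using 2 R(2) by (intro scaleR_gen_in_pos_cone) auto
    ultimately show False
      using gen_plus_cone_nonzero[OF R(1) zero_less_one] by blast
  next
    case 3
    have "p *\<^sub>R g r1 = 1 *\<^sub>R g r + (- q) *\<^sub>R g r2"
      using eq by simp
    moreover have "1 *\<^sub>R g r + (- q) *\<^sub>R g r2 \<in> pos_cone (g ` (R - {r1}))"
      using R ne 3 by (intro pos_cone_add scaleR_gen_in_pos_cone) auto
    ultimately have "1 *\<^sub>R g r + (- q) *\<^sub>R g r2 = 0"
      using multiple_of_gen_in_cone_of_others[OF R(2)] by blast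
    moreover have "(- q) *\<^sub>R g r2 \<in> \<sigma>"
      using 3 R(3) by (intro scaleR_gen_in_pos_cone) auto
    ultimately show False
      using gen_plus_cone_nonzero[OF R(1) zero_less_one] by blast
  qed
qed

lemma det3_gens_nonzero:
  assumes R: "r1 \<in> R" "r2 \<in> R" "r3 \<in> R" and ne: "r1 \<noteq> r2" "r1 \<noteq> r3" "r2 \<noteq> r3"
  shows "det3 (g r1) (g r2) (g r3) \<noteq> 0"
proof
  assume d: "det3 (g r1) (g r2) (g r3) = 0"
  define n where "n = cross3 (g r1) (g r2)"
  have K: "n \<bullet> n \<noteq> 0"
    using cross3_gens_nonzero[OF R(1,2) ne(1)] by (simp add: n_def)
  have "det3 (g r1) (g r2) n = n \<bullet> n"
    by (simp add: det3_def n_def)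
  then have "(n \<bullet> n) *\<^sub>R g r3 = det3 (g r3) (g r2) n *\<^sub>R g r1 + det3 (g r1) (g r3) n *\<^sub>R g r2"
    using det3_cramer[of "g r1" "g r2" n "g r3"] d by simp
  moreover have "\<dots> \<in> span {g r1, g r2}"
    by (intro span_add span_scale span_base) auto
  ultimately have "(1 / (n \<bullet> n)) *\<^sub>R ((n \<bullet> n) *\<^sub>R g r3) \<in> span {g r1, g r2}"
    by (metis span_scale)
  then have "g r3 \<in> span {g r1, g r2}"
    using K by simp
  then show False
    using gen_notin_span_pair[OF R(3,1,2)] ne by blast
qed

definition orient :: "'r \<Rightarrow> 'r \<Rightarrow> 'r \<Rightarrow> real" where
  "orient r s t = det3 (g r) (g s) (g t)"

lemma orient_swap12: "orient s r t = - orient r s t"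
  and orient_swap23: "orient r t s = - orient r s t"
  and orient_cycle: "orient s t r = orient r s t"
  unfolding orient_def by (rule det3_swap12 det3_swap23 det3_cycle)+

lemma orient_same: "orient r r t = 0" "orient r s s = 0" "orient r s r = 0"
  unfolding orient_def by (rule det3_same)+

lemma orient_nonzero:
  "r \<in> R \<Longrightarrow> s \<in> R \<Longrightarrow> t \<in> R \<Longrightarrow> r \<noteq> s \<Longrightarrow> r \<noteq> t \<Longrightarrow> s \<noteq> t \<Longrightarrow> orient r s t \<noteq> 0"
  unfolding orient_def by (rule det3_gens_nonzero)

lemma orient_pos_distinct: "0 < orient r s t \<Longrightarrow> r \<noteq> s \<and> r \<noteq> t \<and> s \<noteq> t"
  using orient_same by auto

lemma orient_four_gens:
  "orient a v w *\<^sub>R g u + orient a u v *\<^sub>R g w = orient a u w *\<^sub>R g v + orient u v w *\<^sub>R g a"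
  unfolding orient_def by (rule det3_four_vectors)

lemma orient_trans:
  assumes R: "a \<in> R" "u \<in> R" "v \<in> R" "w \<in> R" and ne: "u \<noteq> a" "v \<noteq> a" "w \<noteq> a"
    and pos: "0 < orient a u v" "0 < orient a v w"
  shows "0 < orient a u w"
proof (rule ccontr)
  assume neg: "\<not> ?thesis"
  define y where "y = orient a u v *\<^sub>R g w + (- orient a u w) *\<^sub>R g v"
  have "orient u v w *\<^sub>R g a = orient a v w *\<^sub>R g u + y"
    using orient_four_gens[of a v w u] by (simp add: y_def algebra_simps)
  moreover have "orient a v w *\<^sub>R g u + y \<in> pos_cone (g ` (R - {a}))"
    unfolding y_def using R ne pos neg by (intro pos_cone_add scaleR_gen_in_pos_cone) auto
  ultimately have "orient a v w *\<^sub>R g u + y = 0"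
    using multiple_of_gen_in_cone_of_others[OF R(1)] by blast
  moreover have "y \<in> \<sigma>"
    unfolding y_def using R pos neg by (intro pos_cone_add scaleR_gen_in_pos_cone) auto
  ultimately show False
    using gen_plus_cone_nonzero[OF R(2) pos(2)] by blast
qed

lemma orient_shift:
  assumes R: "a \<in> R" "u \<in> R" "v \<in> R" "w \<in> R" and ne: "u \<noteq> a" "v \<noteq> a" "w \<noteq> a"
    and pos: "0 < orient a u v" "0 < orient a v w"
  shows "0 < orient u v w"
proof (rule ccontr)
  assume neg: "\<not> ?thesis"
  have auw: "0 < orient a u w"
    by (rule orient_trans[OF R ne pos])
  have "u \<noteq> v" "w \<noteq> v"
    using pos orient_pos_distinct by blast+
  define x where "x = orient a v w *\<^sub>R g u + orient a u v *\<^sub>R g w + (- orient u v w) *\<^sub>R g a"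
  have "orient a u w *\<^sub>R g v = x"
    using orient_four_gens[of a v w u] by (simp add: x_def algebra_simps)
  moreover have "x \<in> pos_cone (g ` (R - {v}))"
    unfolding x_def using R ne pos neg \<open>u \<noteq> v\<close> \<open>w \<noteq> v\<close>
    by (intro pos_cone_add scaleR_gen_in_pos_cone) auto
  ultimately have "orient a u w = 0"
    using multiple_of_gen_in_cone_of_others[OF R(3)] by blast
  then show False
    using auw by simp
qed

lemma enumeration_around:
  assumes r0: "r0 \<in> R"
  obtains e where "bij_betw e {..<card R - 1} (R - {r0})"
    "\<And>i j. i < j \<Longrightarrow> j < card R - 1 \<Longrightarrow> 0 < orient r0 (e i) (e j)"
proof (rule strict_total_order_enumeration[of "R - {r0}" "\<lambda>u v. 0 < orient r0 u v"])
  show "0 < orient r0 u w"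
    if "u \<in> R - {r0}" "v \<in> R - {r0}" "w \<in> R - {r0}" "0 < orient r0 u v" "0 < orient r0 v w" for u v w
    using orient_trans[OF r0 _ _ _ _ _ _ that(4,5)] that(1-3) by blast
  show "0 < orient r0 u v \<or> 0 < orient r0 v u" if "u \<in> R - {r0}" "v \<in> R - {r0}" "u \<noteq> v" for u v
    using orient_nonzero[of r0 u v] orient_swap23[of r0 u v] that r0 by force
qed (use that finite_R r0 orient_same in auto)

text \<open>The enumeration lists the generators in the cyclic order of the vertices of a
  cross-section of \<sigma>.\<close>

lemma cyclic_enumeration:
  obtains e where "bij_betw e {..<card R} R"
    "\<And>i j k. i < j \<Longrightarrow> j < k \<Longrightarrow> k < card R \<Longrightarrow> 0 < orient (e i) (e j) (e k)"
proof (cases "R = {}")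
  case True
  then show ?thesis
    using that[of "\<lambda>_. undefined"] by (simp add: bij_betw_def)
next
  case False
  then obtain r0 where r0: "r0 \<in> R"
    by blast
  have "0 < card R"
    using r0 finite_R card_gt_0_iff by blast
  then have card: "Suc (card R - 1) = card R"
    by simp
  obtain e' where e': "bij_betw e' {..<card R - 1} (R - {r0})"
    and e'_less: "\<And>i j. i < j \<Longrightarrow> j < card R - 1 \<Longrightarrow> 0 < orient r0 (e' i) (e' j)"
    using enumeration_around[OF r0] by blast
  define e where "e i = (if i = 0 then r0 else e' (i - 1))" for i
  have "bij_betw e {..<Suc (card R - 1)} (insert r0 (R - {r0}))"
    unfolding e_def by (rule bij_betw_prepend[OF e']) simp
  then have "bij_betw e {..<card R} R"
    using r0 by (simp only: card insert_Diff)
  moreover have "0 < orient (e i) (e j) (e k)" if "i < j" "j < k" "k < card R" for i j k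
  proof (cases "i = 0")
    case True
    then show ?thesis
      using that e'_less[of "j - 1" "k - 1"] by (simp add: e_def)
  next
    case False
    have "e i \<in> R - {r0}" "e j \<in> R - {r0}" "e k \<in> R - {r0}"
      using that False e' by (auto simp: e_def bij_betw_def)
    moreover have "0 < orient r0 (e i) (e j)" "0 < orient r0 (e j) (e k)"
      using that False e'_less by (simp_all add: e_def)
    ultimately show ?thesis
      using orient_shift[OF r0] by blast
  qed
  ultimately show ?thesis
    using that by blast
qed

definition one_sided :: "'r \<Rightarrow> 'r \<Rightarrow> bool" where
  "one_sided r s \<longleftrightarrow> (\<forall>v\<in>R - {r, s}. 0 < orient r s v) \<or> (\<forall>v\<in>R - {r, s}. orient r s v < 0)"

definition edge :: "'r \<Rightarrow> 'r \<Rightarrow> bool" where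
  "edge r s \<longleftrightarrow> r \<in> R \<and> s \<in> R \<and> r \<noteq> s \<and> pos_cone (g ` {r, s}) face_of \<sigma>"

lemma edge_commute: "edge r s \<longleftrightarrow> edge s r"
  unfolding edge_def by (metis insert_commute)

definition edges_in :: "'r set \<Rightarrow> ('r \<times> 'r) set" where
  "edges_in P = {(x, y). x \<in> P \<and> y \<in> P \<and> edge x y}"

lemma edges_in_rtrancl_commute:
  assumes "(x, y) \<in> (edges_in P)\<^sup>*"
  shows "(y, x) \<in> (edges_in P)\<^sup>*"
proof -
  have "sym (edges_in P)"
    by (auto simp: sym_def edges_in_def edge_commute)
  then show ?thesis
    using assms sym_rtrancl by (metis symD)
qed

lemma positive_side_imp_face:
  assumes rs: "r \<in> R" "s \<in> R" and pos: "\<forall>v\<in>R - {r, s}. 0 < orient r s v"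
  shows "pos_cone (g ` {r, s}) face_of \<sigma>"
proof -
  define u where "u = cross3 (g r) (g s)"
  have u: "u \<bullet> g v = orient r s v" for v
    by (simp add: u_def orient_def det3_def)
  have side: "0 \<le> u \<bullet> g v \<and> (u \<bullet> g v = 0 \<longleftrightarrow> v \<in> {r, s})" if "v \<in> R" for v
  proof (cases "v \<in> {r, s}")
    case True
    then show ?thesis
      using orient_same(2,3)[of r s] by (auto simp: u)
  next
    case False
    then have "0 < orient r s v"
      using pos that by blast
    then show ?thesis
      using False by (simp add: u)
  qed
  have "\<forall>x\<in>g ` R. 0 \<le> u \<bullet> x"
    using side by blast
  moreover have "{x\<in>g ` R. u \<bullet> x = 0} = g ` {r, s}"
    using side rs by blast
  ultimately show ?thesis
    using face_of_pos_cone_hyperplane by metis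
qed

lemma one_sided_imp_face:
  assumes rs: "r \<in> R" "s \<in> R" and "one_sided r s"
  shows "pos_cone (g ` {r, s}) face_of \<sigma>"
  using assms(3) unfolding one_sided_def
proof
  assume "\<forall>v\<in>R - {r, s}. 0 < orient r s v"
  then show ?thesis
    by (rule positive_side_imp_face[OF rs])
next
  assume "\<forall>v\<in>R - {r, s}. orient r s v < 0"
  then have "\<forall>v\<in>R - {s, r}. 0 < orient s r v"
    by (simp add: orient_swap12[of r s] insert_commute)
  then have "pos_cone (g ` {s, r}) face_of \<sigma>"
    by (rule positive_side_imp_face[OF rs(2,1)])
  then show ?thesis
    by (simp add: insert_commute)
qed

lemma opposite_sides_meet_in_pair_cone:
  assumes rs: "r \<in> R" "s \<in> R" "r \<noteq> s" and v: "v \<in> R" "orient r s v < 0" and w: "w \<in> R" "0 < orient r s w"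
  shows "orient r s w *\<^sub>R g v + (- orient r s v) *\<^sub>R g w \<in> pos_cone (g ` {r, s})"
proof -
  define y where "y = orient r s w *\<^sub>R g v + (- orient r s v) *\<^sub>R g w"
  have vw: "v \<noteq> r" "v \<noteq> s" "w \<noteq> r" "w \<noteq> s"
    using v(2) w(2) orient_same(2,3) by auto
  have eq: "y = (- orient s v w) *\<^sub>R g r + orient r v w *\<^sub>R g s"
    using orient_four_gens[of r v w s] by (simp add: y_def algebra_simps)
  have "0 \<le> - orient s v w"
  proof (rule ccontr)
    assume neg: "\<not> ?thesis"
    have "orient r v w *\<^sub>R g s = y + orient s v w *\<^sub>R g r"
      using eq by simp
    moreover have "y + orient s v w *\<^sub>R g r \<in> pos_cone (g ` (R - {s}))"
      unfolding y_def using v w rs vw neg by (intro pos_cone_add scaleR_gen_in_pos_cone) auto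
    ultimately have "y + orient s v w *\<^sub>R g r = 0"
      using multiple_of_gen_in_cone_of_others[OF rs(2)] by blast
    then have "orient r s w *\<^sub>R g v + ((- orient r s v) *\<^sub>R g w + orient s v w *\<^sub>R g r) = 0"
      unfolding y_def by (simp only: add.assoc)
    moreover have "(- orient r s v) *\<^sub>R g w + orient s v w *\<^sub>R g r \<in> \<sigma>"
      using v w rs neg by (intro pos_cone_add scaleR_gen_in_pos_cone) auto
    ultimately show False
      using gen_plus_cone_nonzero[OF v(1) w(2)] by blast
  qed
  moreover have "0 \<le> orient r v w"
  proof (rule ccontr)
    assume neg: "\<not> ?thesis"
    have "(- orient s v w) *\<^sub>R g r = y + (- orient r v w) *\<^sub>R g s"
      using eq by simp
    moreover have "y + (- orient r v w) *\<^sub>R g s \<in> pos_cone (g ` (R - {r}))"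
      unfolding y_def using v w rs vw neg by (intro pos_cone_add scaleR_gen_in_pos_cone) auto
    ultimately have "y + (- orient r v w) *\<^sub>R g s = 0"
      using multiple_of_gen_in_cone_of_others[OF rs(1)] by blast
    then have "orient r s w *\<^sub>R g v + ((- orient r s v) *\<^sub>R g w + (- orient r v w) *\<^sub>R g s) = 0"
      unfolding y_def by (simp only: add.assoc)
    moreover have "(- orient r s v) *\<^sub>R g w + (- orient r v w) *\<^sub>R g s \<in> \<sigma>"
      using v w rs neg by (intro pos_cone_add scaleR_gen_in_pos_cone) auto
    ultimately show False
      using gen_plus_cone_nonzero[OF v(1) w(2)] by blast
  qed
  ultimately show ?thesis
    unfolding y_def[symmetric] eq by (intro pos_cone_add scaleR_gen_in_pos_cone) auto
qed

lemma face_imp_one_sided: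
  assumes rs: "r \<in> R" "s \<in> R" "r \<noteq> s" and F: "pos_cone (g ` {r, s}) face_of \<sigma>"
  shows "one_sided r s"
proof (rule ccontr)
  assume "\<not> one_sided r s"
  then obtain v w where v: "v \<in> R" "v \<noteq> r" "v \<noteq> s" "\<not> 0 < orient r s v"
    and w: "w \<in> R" "w \<noteq> r" "w \<noteq> s" "\<not> orient r s w < 0"
    unfolding one_sided_def by blast
  then have v_neg: "orient r s v < 0" and w_pos: "0 < orient r s w"
    using orient_nonzero[OF rs(1,2)] rs(3) by (metis linorder_neqE_linordered_idom)+
  have "orient r s w *\<^sub>R g v + (- orient r s v) *\<^sub>R g w \<in> pos_cone (g ` {r, s})"
    by (rule opposite_sides_meet_in_pair_cone[OF rs v(1) v_neg w(1) w_pos])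
  moreover have "orient r s w *\<^sub>R g v \<in> \<sigma>"
    using v(1) w_pos by (intro scaleR_gen_in_pos_cone) auto
  moreover have "(- orient r s v) *\<^sub>R g w \<in> \<sigma>"
    using w(1) v_neg by (intro scaleR_gen_in_pos_cone) auto
  ultimately have "orient r s w *\<^sub>R g v \<in> pos_cone (g ` {r, s})"
    using face_of_convex_cone_add[OF convex_cone_pos_cone F] by blast
  moreover have "pos_cone (g ` {r, s}) \<subseteq> pos_cone (g ` (R - {v}))"
    using rs v by (intro pos_cone_mono) auto
  ultimately have "orient r s w = 0"
    using multiple_of_gen_in_cone_of_others[OF v(1)] by blast
  then show False
    using w_pos by simp
qed

lemma edge_iff_one_sided: "r \<in> R \<Longrightarrow> s \<in> R \<Longrightarrow> r \<noteq> s \<Longrightarrow> edge r s \<longleftrightarrow> one_sided r s"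
  unfolding edge_def using one_sided_imp_face face_imp_one_sided by blast

lemma independent_gen_pair:
  assumes "r \<in> R" "s \<in> R" "r \<noteq> s"
  shows "independent {g r, g s}"
proof -
  have "g r \<notin> span {g s}"
  proof
    assume "g r \<in> span {g s}"
    then obtain k where "g r = k *\<^sub>R g s"
      by (auto simp: span_singleton)
    then show False
      using cross3_gens_nonzero[OF assms] by (simp add: cross_mult_left)
  qed
  moreover have "g r \<noteq> g s"
    using inj_on_gen assms by (auto dest: inj_onD)
  ultimately show ?thesis
    using gen_nonzero assms(2) by (simp add: independent_insert)
qed

lemma aff_dim_gen_pair:
  assumes "r \<in> R" "s \<in> R" "r \<noteq> s"
  shows "aff_dim (pos_cone (g ` {r, s})) = 2"
proof -
  have "g r \<noteq> g s"
    using inj_on_gen assms by (auto dest: inj_onD)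
  then show ?thesis
    using independent_gen_pair[OF assms] by (simp add: aff_dim_pos_cone dim_eq_card_independent)
qed

end

section \<open>Interleaving index sets\<close>

text \<open>Two elements separated by two non-elements on the cycle {..<n}: the negation of being a
  cyclic interval.\<close>

definition alternating :: "nat \<Rightarrow> nat set \<Rightarrow> bool" where
  "alternating n I \<longleftrightarrow> (\<exists>i j k l. i < j \<and> j < k \<and> k < l \<and> l < n \<and>
     (i \<in> I \<longleftrightarrow> k \<in> I) \<and> (j \<in> I \<longleftrightarrow> l \<in> I) \<and> (i \<in> I \<longleftrightarrow> j \<notin> I))"

lemma alternating_complement: "alternating n ({..<n} - I) \<longleftrightarrow> alternating n I"
proof -
  have "(i < j \<and> j < k \<and> k < l \<and> l < n \<and>
      (i \<in> {..<n} - I \<longleftrightarrow> k \<in> {..<n} - I) \<and> (j \<in> {..<n} - I \<longleftrightarrow> l \<in> {..<n} - I) \<and>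
      (i \<in> {..<n} - I \<longleftrightarrow> j \<notin> {..<n} - I)) \<longleftrightarrow>
    (i < j \<and> j < k \<and> k < l \<and> l < n \<and>
      (i \<in> I \<longleftrightarrow> k \<in> I) \<and> (j \<in> I \<longleftrightarrow> l \<in> I) \<and> (i \<in> I \<longleftrightarrow> j \<notin> I))" for i j k l
    by auto
  then show ?thesis
    unfolding alternating_def by presburger
qed

lemma not_alternating_arc:
  assumes "\<not> alternating n I" "a < b" "b < n" "a \<in> I" "b \<in> I"
  shows "{a..b} \<subseteq> I \<or> {b..<n} \<union> {..a} \<subseteq> I"
proof (rule ccontr)
  assume "\<not> ?thesis"
  then obtain m l where m: "m \<in> {a..b}" "m \<notin> I" and l: "l \<in> {b..<n} \<union> {..a}" "l \<notin> I"
    by blast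
  then have "a < m" "m < b" "l < n" "b < l \<or> l < a"
    using assms(2-5) by (auto simp: order_le_less)
  then have "alternating n I"
  proof (elim conjE disjE)
    assume "a < m" "m < b" "l < n" "b < l"
    then show ?thesis
      using assms(4,5) m(2) l(2) unfolding alternating_def
      by (intro exI[of _ a] exI[of _ m] exI[of _ b] exI[of _ l]) auto
  next
    assume "a < m" "m < b" "l < n" "l < a"
    then show ?thesis
      using assms(3-5) m(2) l(2) unfolding alternating_def
      by (intro exI[of _ l] exI[of _ a] exI[of _ m] exI[of _ b]) auto
  qed
  with assms(1) show False
    by contradiction
qed

lemma not_alternating_interval_or_ends:
  assumes na: "\<not> alternating n I" and I: "I \<subseteq> {..<n}" "I \<noteq> {}"
  shows "I = {Min I..Max I} \<or> {0, n - 1} \<subseteq> I"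
proof -
  have fin: "finite I"
    using I(1) finite_subset by blast
  define a b where "a = Min I" and "b = Max I"
  have ab: "a \<in> I" "b \<in> I" "I \<subseteq> {a..b}" "b < n"
    using fin I by (auto simp: a_def b_def)
  show ?thesis
  proof (cases "{a..b} \<subseteq> I")
    case True
    then show ?thesis
      using ab(3) by (simp add: a_def b_def)
  next
    case False
    moreover have "a \<le> b"
      using ab by auto
    ultimately have "a < b"
      using ab(1) by (cases "a = b") auto
    then have "{b..<n} \<union> {..a} \<subseteq> I"
      using not_alternating_arc[OF na _ ab(4) ab(1,2)] False by blast
    then show ?thesis
      using ab(4) by auto
  qed
qed

lemma not_alternating_interval:
  assumes na: "\<not> alternating n I" and I: "I \<subseteq> {..<n}"
  shows "\<exists>p q. I = {p..q} \<or> {..<n} - I = {p..q}"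
proof (cases "I = {} \<or> I = {..<n}")
  case True
  then show ?thesis
    by (metis Diff_cancel atLeastatMost_empty zero_less_one)
next
  case False
  then have J: "{..<n} - I \<subseteq> {..<n}" "{..<n} - I \<noteq> {}"
    using I by auto
  have "\<not> {0, n - 1} \<subseteq> I \<or> \<not> {0, n - 1} \<subseteq> {..<n} - I"
    by auto
  then show ?thesis
    using not_alternating_interval_or_ends[OF na I] False
      not_alternating_interval_or_ends[OF _ J] na alternating_complement by blast
qed

section \<open>Generators in cyclic order\<close>

locale ordered_generators = extremal_generators R g for R :: "'r set" and g +
  fixes e :: "nat \<Rightarrow> 'r"
  assumes bij_e: "bij_betw e {..<card R} R"
    and orient_e: "\<And>i j k. i < j \<Longrightarrow> j < k \<Longrightarrow> k < card R \<Longrightarrow> 0 < orient (e i) (e j) (e k)"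
begin

lemma e_in: "i < card R \<Longrightarrow> e i \<in> R"
  using bij_e by (auto simp: bij_betw_def)

lemma e_eq_iff: "i < card R \<Longrightarrow> j < card R \<Longrightarrow> e i = e j \<longleftrightarrow> i = j"
  using bij_e by (auto simp: bij_betw_def dest: inj_onD)

lemma obtain_index:
  assumes "r \<in> R"
  obtains i where "i < card R" "r = e i"
  using assms bij_e by (auto simp: bij_betw_def)

definition indices :: "'r set \<Rightarrow> nat set" where
  "indices P = {i. i < card R \<and> e i \<in> P}"

lemma indices_subset: "indices P \<subseteq> {..<card R}"
  by (auto simp: indices_def)

lemma e_image_indices: "P \<subseteq> R \<Longrightarrow> e ` indices P = P"
  by (auto simp: indices_def e_in elim!: obtain_index)

lemma e_image_indices_complement: "P \<subseteq> R \<Longrightarrow> e ` ({..<card R} - indices P) = R - P"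
  by (auto simp: indices_def e_in elim!: obtain_index)

lemma orient_e_pos_iff:
  assumes "i < j" "j < card R" "m < card R" "m \<noteq> i" "m \<noteq> j"
  shows "0 < orient (e i) (e j) (e m) \<longleftrightarrow> m < i \<or> j < m"
proof (cases "m < i \<or> j < m")
  case True
  then show ?thesis
  proof
    assume "m < i"
    then show ?thesis
      using orient_e[of m i j] orient_cycle[of "e i" "e j" "e m"] assms by simp
  next
    assume "j < m"
    then show ?thesis
      using orient_e[of i j m] assms by simp
  qed
next
  case False
  then have "i < m" "m < j"
    using assms by auto
  then show ?thesis
    using orient_e[of i m j] orient_swap23[of "e i" "e m" "e j"] assms by simp
qed

lemma orient_e_neg_iff:
  assumes "i < j" "j < card R" "m < card R" "m \<noteq> i" "m \<noteq> j"
  shows "orient (e i) (e j) (e m) < 0 \<longleftrightarrow> i < m \<and> m < j"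
proof -
  have "orient (e i) (e j) (e m) \<noteq> 0"
    using assms by (intro orient_nonzero) (auto simp: e_in e_eq_iff)
  then show ?thesis
    using orient_e_pos_iff[OF assms] assms by linarith
qed

lemma ball_R_minus_pair:
  assumes "i < card R" "j < card R"
  shows "(\<forall>v\<in>R - {e i, e j}. Q v) \<longleftrightarrow> (\<forall>m<card R. m \<noteq> i \<longrightarrow> m \<noteq> j \<longrightarrow> Q (e m))"
  using assms by (auto simp: e_in e_eq_iff elim!: obtain_index)

lemma one_sided_e_iff:
  assumes ij: "i < j" "j < card R"
  shows "one_sided (e i) (e j) \<longleftrightarrow> j = Suc i \<or> (i = 0 \<and> j = card R - 1)"
proof -
  have "(\<forall>v\<in>R - {e i, e j}. 0 < orient (e i) (e j) v)
      \<longleftrightarrow> (\<forall>m<card R. m \<noteq> i \<longrightarrow> m \<noteq> j \<longrightarrow> m < i \<or> j < m)"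
    using ij by (simp add: ball_R_minus_pair orient_e_pos_iff)
  also have "\<dots> \<longleftrightarrow> j = Suc i"
    using ij by presburger
  finally have pos: "(\<forall>v\<in>R - {e i, e j}. 0 < orient (e i) (e j) v) \<longleftrightarrow> j = Suc i" .
  have "(\<forall>v\<in>R - {e i, e j}. orient (e i) (e j) v < 0)
      \<longleftrightarrow> (\<forall>m<card R. m \<noteq> i \<longrightarrow> m \<noteq> j \<longrightarrow> i < m \<and> m < j)"
    using ij by (simp add: ball_R_minus_pair orient_e_neg_iff)
  also have "\<dots> \<longleftrightarrow> i = 0 \<and> j = card R - 1"
    using ij by presburger
  finally show ?thesis
    using pos unfolding one_sided_def by blast
qed

lemma edge_e_iff:
  assumes "i < card R" "j < card R"
  shows "edge (e i) (e j) \<longleftrightarrow> i \<noteq> j \<and> (j = Suc i \<or> i = Suc j \<or> {i, j} = {0, card R - 1})"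
proof (cases i j rule: linorder_cases)
  case less
  then show ?thesis
    using assms edge_iff_one_sided[of "e i" "e j"] one_sided_e_iff[OF less assms(2)]
    by (auto simp: e_in e_eq_iff doubleton_eq_iff)
next
  case equal
  then show ?thesis
    by (simp add: edge_def)
next
  case greater
  then show ?thesis
    using assms edge_iff_one_sided[of "e j" "e i"] one_sided_e_iff[OF greater assms(1)] edge_commute
    by (auto simp: e_in e_eq_iff doubleton_eq_iff)
qed

lemma arc_connected:
  assumes "a \<le> b" "{a..b} \<subseteq> indices P"
  shows "(e a, e b) \<in> (edges_in P)\<^sup>*"
proof -
  have step: "(e m, e (Suc m)) \<in> edges_in P" if "a \<le> m" "m < b" for m
    using that assms(2) by (auto simp: edges_in_def indices_def edge_e_iff subset_iff)
  have "(e a, e (a + k)) \<in> (edges_in P)\<^sup>*" if "a + k \<le> b" for k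
    using that
  proof (induction k)
    case (Suc k)
    then show ?case
      using step[of "a + k"] by (simp add: rtrancl_into_rtrancl)
  qed simp
  then show ?thesis
    using assms(1) by (metis le_add_diff_inverse order_refl)
qed

lemma wrap_arc_connected:
  assumes "a \<le> b" "b < card R" "{b..<card R} \<union> {..a} \<subseteq> indices P"
  shows "(e b, e a) \<in> (edges_in P)\<^sup>*"
proof -
  note b = assms(2)
  show ?thesis
  proof (cases "card R - 1 = 0")
    case True
    then have "a = b"
      using assms(1) b by linarith
    then show ?thesis
      by simp
  next
    case False
    have "{b..card R - 1} \<subseteq> {b..<card R}"
      using b by auto
    then have "(e b, e (card R - 1)) \<in> (edges_in P)\<^sup>*"
      using assms b by (intro arc_connected) auto
    moreover have "(e (card R - 1), e 0) \<in> edges_in P"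
    proof -
      have "card R - 1 \<in> {b..<card R}"
        using b by auto
      then have "card R - 1 \<in> indices P" "0 \<in> indices P"
        using assms(3) by auto
      then show ?thesis
        using False by (auto simp: edges_in_def indices_def edge_e_iff insert_commute)
    qed
    moreover have "(e 0, e a) \<in> (edges_in P)\<^sup>*"
      using assms by (intro arc_connected) auto
    ultimately show ?thesis
      by (meson rtrancl_into_rtrancl rtrancl_trans)
  qed
qed

lemma not_alternating_connected_ordered:
  assumes na: "\<not> alternating (card R) (indices P)"
    and ij: "i < j" "i \<in> indices P" "j \<in> indices P"
  shows "(e i, e j) \<in> (edges_in P)\<^sup>*"
proof -
  have j: "j < card R"
    using ij(3) by (simp add: indices_def)
  then consider "{i..j} \<subseteq> indices P" | "{j..<card R} \<union> {..i} \<subseteq> indices P"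
    using not_alternating_arc[OF na ij(1) _ ij(2,3)] by blast
  then show ?thesis
  proof cases
    case 1
    then show ?thesis
      using ij(1) by (intro arc_connected) auto
  next
    case 2
    then show ?thesis
      using ij(1) j by (auto intro!: edges_in_rtrancl_commute[OF wrap_arc_connected])
  qed
qed

lemma not_alternating_connected:
  assumes P: "P \<subseteq> R" and na: "\<not> alternating (card R) (indices P)" and xy: "x \<in> P" "y \<in> P"
  shows "(x, y) \<in> (edges_in P)\<^sup>*"
proof -
  obtain i j where ij: "i \<in> indices P" "j \<in> indices P" "x = e i" "y = e j"
    using xy P e_image_indices by (metis imageE)
  consider "i = j" | "i < j" | "j < i"
    by linarith
  then show ?thesis
  proof cases
    case 1
    then show ?thesis
      using ij by simp
  next
    case 2
    then show ?thesis
      unfolding ij(3,4) using na ij(1,2) by (intro not_alternating_connected_ordered)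
  next
    case 3
    show ?thesis
      unfolding ij(3,4)
      by (rule edges_in_rtrancl_commute[OF not_alternating_connected_ordered[OF na 3 ij(2,1)]])
  qed
qed

lemma arc_closed:
  assumes st: "s < t" "t < card R" "e s \<notin> P" "e t \<notin> P"
    and path: "(x, y) \<in> (edges_in P)\<^sup>*" and x: "x \<in> e ` {s<..<t}"
  shows "y \<in> e ` {s<..<t}"
  using path x
proof (induction rule: rtrancl_induct)
  case (step y z)
  then obtain a where a: "s < a" "a < t" "y = e a"
    by auto
  have "z \<in> P" "edge y z"
    using step(2) by (auto simp: edges_in_def)
  then obtain b where b: "b < card R" "z = e b"
    by (auto simp: edge_def elim: obtain_index)
  have "edge (e a) (e b)"
    using \<open>edge y z\<close> a b by simp
  then have "b = Suc a \<or> a = Suc b"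
    using a b st by (auto simp: edge_e_iff doubleton_eq_iff)
  moreover have "b \<noteq> s" "b \<noteq> t"
    using st \<open>z \<in> P\<close> b by auto
  ultimately show ?case
    using a b by auto
qed

lemma arc_separates:
  assumes "s < m" "m < t" "t < card R" "e s \<notin> P" "e t \<notin> P" "m' < card R" "m' < s \<or> t < m'"
  shows "(e m, e m') \<notin> (edges_in P)\<^sup>*"
proof
  assume path: "(e m, e m') \<in> (edges_in P)\<^sup>*"
  have "e m \<in> e ` {s<..<t}"
    using assms by auto
  then have "e m' \<in> e ` {s<..<t}"
    using assms by (intro arc_closed[OF _ _ _ _ path]) auto
  then obtain k where "s < k" "k < t" "e m' = e k"
    by auto
  then have "m' = k"
    using assms e_eq_iff by simp
  then show False
    using assms \<open>s < k\<close> \<open>k < t\<close> by linarith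
qed

lemma orient_e_four:
  assumes "i < j" "j < k" "k < l" "l < card R"
  shows "orient (e i) (e k) (e l) *\<^sub>R g (e j) + orient (e i) (e j) (e k) *\<^sub>R g (e l)
       = orient (e i) (e j) (e l) *\<^sub>R g (e k) + orient (e j) (e k) (e l) *\<^sub>R g (e i)"
    and "0 < orient (e i) (e k) (e l)" "0 < orient (e i) (e j) (e k)"
    "0 < orient (e i) (e j) (e l)" "0 < orient (e j) (e k) (e l)"
  using orient_four_gens[of "e i" "e k" "e l" "e j"] orient_e assms by auto

lemma interleaved_cones_meet:
  assumes ijkl: "i < j" "j < k" "k < l" "l < card R"
    and A: "e i \<in> A" "e k \<in> A" and B: "e j \<in> B" "e l \<in> B"
  shows "pos_cone (g ` A) \<inter> pos_cone (g ` B) \<noteq> {0}"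
proof -
  note four = orient_e_four[OF ijkl]
  define y where "y = orient (e i) (e j) (e l) *\<^sub>R g (e k) + orient (e j) (e k) (e l) *\<^sub>R g (e i)"
  have "y \<in> pos_cone (g ` A)"
    unfolding y_def using A four by (intro pos_cone_add scaleR_gen_in_pos_cone) auto
  moreover have "y \<in> pos_cone (g ` B)"
    unfolding y_def four(1)[symmetric] using B four by (intro pos_cone_add scaleR_gen_in_pos_cone) auto
  moreover have "y \<noteq> 0"
    unfolding y_def using ijkl four by (intro gen_plus_cone_nonzero e_in scaleR_gen_in_pos_cone) auto
  ultimately show ?thesis
    by blast
qed

lemma interleaved_cone_UNIV:
  assumes ijkl: "i < j" "j < k" "k < l" "l < card R" and C: "convex_cone C"
    and mem: "g (e i) \<in> C" "g (e k) \<in> C" "- g (e j) \<in> C" "- g (e l) \<in> C"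
  shows "C = UNIV"
proof -
  note four = orient_e_four[OF ijkl]
  have nonneg: "0 \<le> orient (e i) (e k) (e l)" "0 \<le> orient (e i) (e j) (e k)"
    "0 \<le> orient (e i) (e j) (e l)" "0 \<le> orient (e j) (e k) (e l)"
    using four(2-5) by auto
  have neg: "orient (e i) (e k) (e l) *\<^sub>R (- g (e j)) + orient (e i) (e j) (e k) *\<^sub>R (- g (e l))
      = orient (e i) (e j) (e l) *\<^sub>R (- g (e k)) + orient (e j) (e k) (e l) *\<^sub>R (- g (e i))"
    by (metis four(1) minus_add_distrib scaleR_minus_right)
  have "g (e j) \<in> C"
    using convex_cone_flip[OF C four(2) nonneg(3,4,2) four(1)[symmetric]] mem by simp
  moreover have "- g (e k) \<in> C"
    using convex_cone_flip[OF C four(4) nonneg(1,2,4) neg] mem by simp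
  moreover have "- g (e i) \<in> C"
    using convex_cone_flip[OF C four(5) nonneg(1,2,3) neg[unfolded add.commute[of "_ *\<^sub>R (- g (e k))"]]] mem
    by simp
  moreover have "det3 (g (e i)) (g (e j)) (g (e k)) \<noteq> 0"
    using four(3) by (simp add: orient_def)
  ultimately show ?thesis
    using convex_cone_eq_UNIV[OF C] mem by blast
qed

lemma gen_cone_disjoint:
  assumes "r \<in> R"
  shows "pos_cone (g ` {r}) \<inter> pos_cone (g ` (R - {r})) = {0}"
proof -
  have "x = 0" if x: "x \<in> pos_cone (g ` {r})" "x \<in> pos_cone (g ` (R - {r}))" for x
  proof -
    obtain c where "x = c *\<^sub>R g r"
      using x(1) mem_pos_cone_image[of "{r}" g] by auto
    then show "x = 0"
      using multiple_of_gen_in_cone_of_others[OF assms x(2)] by simp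
  qed
  then show ?thesis
    using zero_in_pos_cone by blast
qed

lemma interval_cones_separated:
  assumes pq: "p < q" "q < card R"
  shows "pos_cone (g ` e ` {p..q}) \<inter> pos_cone (g ` (R - e ` {p..q})) = {0}"
proof (rule pos_cone_Int_separated)
  define u where "u = cross3 (g (e p)) (g (e q))"
  have u: "u \<bullet> g (e m) = orient (e p) (e q) (e m)" for m
    by (simp add: u_def orient_def det3_def)
  show "\<forall>x\<in>g ` e ` {p..q}. u \<bullet> x \<le> 0"
  proof
    fix x assume "x \<in> g ` e ` {p..q}"
    then obtain m where m: "p \<le> m" "m \<le> q" "x = g (e m)"
      by auto
    show "u \<bullet> x \<le> 0"
    proof (cases "m = p \<or> m = q")
      case True
      then show ?thesis
        using m orient_same(2,3) by (auto simp: u)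
    next
      case False
      then show ?thesis
        using m pq orient_e_neg_iff[of p q m] by (simp add: u)
    qed
  qed
  show "\<forall>y\<in>g ` (R - e ` {p..q}). 0 < u \<bullet> y"
  proof
    fix y assume "y \<in> g ` (R - e ` {p..q})"
    then obtain m where m: "m < card R" "y = g (e m)" "e m \<notin> e ` {p..q}"
      by (auto elim: obtain_index)
    then have "m < p \<or> q < m" "m \<noteq> p" "m \<noteq> q"
      using pq by force+
    then show "0 < u \<bullet> y"
      using m pq orient_e_pos_iff[of p q m] by (simp add: u)
  qed
qed

lemma interval_cones_disjoint:
  assumes "{p..q} \<subseteq> {..<card R}"
  shows "pos_cone (g ` e ` {p..q}) \<inter> pos_cone (g ` (R - e ` {p..q})) = {0}"
proof -
  consider "q < p" | "p = q" | "p < q"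
    by linarith
  then show ?thesis
  proof cases
    case 1
    then show ?thesis
      using zero_in_pos_cone by auto
  next
    case 2
    then show ?thesis
      using assms gen_cone_disjoint[OF e_in, of p] by auto
  next
    case 3
    then have "q \<in> {p..q}"
      by simp
    then have "q < card R"
      using assms by blast
    with 3 show ?thesis
      by (rule interval_cones_separated)
  qed
qed

lemma not_alternating_cones_disjoint:
  assumes P: "P \<subseteq> R" and na: "\<not> alternating (card R) (indices P)"
  shows "pos_cone (g ` P) \<inter> pos_cone (g ` (R - P)) = {0}"
proof -
  obtain p q where "indices P = {p..q} \<or> {..<card R} - indices P = {p..q}"
    using not_alternating_interval[OF na indices_subset] by blast
  then show ?thesis
  proof
    assume I: "indices P = {p..q}"
    then have "P = e ` {p..q}"
      using e_image_indices[OF P] by simp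
    moreover have "{p..q} \<subseteq> {..<card R}"
      using indices_subset[of P] I by simp
    ultimately show ?thesis
      using interval_cones_disjoint by simp
  next
    assume J: "{..<card R} - indices P = {p..q}"
    then have "R - P = e ` {p..q}" "P = R - e ` {p..q}"
      using e_image_indices_complement[OF P] P by auto
    then show ?thesis
      using interval_cones_disjoint[of p q] J by (auto simp: Int_commute)
  qed
qed

lemma alternating_witness:
  assumes "alternating (card R) (indices P)" "P \<subseteq> R"
  obtains i j k l where "i < j" "j < k" "k < l" "l < card R"
    "e i \<in> P" "e k \<in> P" "e j \<in> R - P" "e l \<in> R - P"
  | i j k l where "i < j" "j < k" "k < l" "l < card R"
    "e i \<in> R - P" "e k \<in> R - P" "e j \<in> P" "e l \<in> P"
proof -
  obtain i j k l where ijkl: "i < j" "j < k" "k < l" "l < card R"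
    and pattern: "i \<in> indices P \<longleftrightarrow> k \<in> indices P" "j \<in> indices P \<longleftrightarrow> l \<in> indices P"
      "i \<in> indices P \<longleftrightarrow> j \<notin> indices P"
    using assms(1) unfolding alternating_def by blast
  have "m \<in> indices P \<longleftrightarrow> e m \<in> P" if "m < card R" for m
    using that by (simp add: indices_def)
  then have "e i \<in> P \<longleftrightarrow> e k \<in> P" "e j \<in> P \<longleftrightarrow> e l \<in> P" "e i \<in> P \<longleftrightarrow> e j \<notin> P"
    using pattern ijkl by simp_all
  moreover have "e i \<in> R" "e j \<in> R" "e k \<in> R" "e l \<in> R"
    using ijkl by (simp_all add: e_in)
  ultimately show ?thesis
    using that ijkl by (cases "e i \<in> P") auto
qed

lemma alternating_cones_meet:
  assumes "P \<subseteq> R" "alternating (card R) (indices P)"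
  shows "pos_cone (g ` P) \<inter> pos_cone (g ` (R - P)) \<noteq> {0}"
  using alternating_witness[OF assms(2,1)]
proof cases
  case (1 i j k l)
  then show ?thesis
    using interleaved_cones_meet[OF 1(1-4) 1(5,6) 1(7,8)] by simp
next
  case (2 i j k l)
  then show ?thesis
    using interleaved_cones_meet[OF 2(1-4) 2(5,6) 2(7,8)] by (simp add: Int_commute)
qed

lemma alternating_disconnected:
  assumes "P \<subseteq> R" "alternating (card R) (indices P)"
  shows "\<exists>a\<in>P. \<exists>b\<in>P. (a, b) \<notin> (edges_in P)\<^sup>*"
  using alternating_witness[OF assms(2,1)]
proof cases
  case (1 i j k l)
  then have "(e k, e i) \<notin> (edges_in P)\<^sup>*"
    by (intro arc_separates[of j k l]) auto
  then show ?thesis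
    using 1 by blast
next
  case (2 i j k l)
  then have "(e j, e l) \<notin> (edges_in P)\<^sup>*"
    by (intro arc_separates[of i j k]) auto
  then show ?thesis
    using 2 by blast
qed

lemma alternating_signed_cone_UNIV:
  assumes "P \<subseteq> R" "alternating (card R) (indices P)"
  shows "pos_cone ((\<lambda>r. - g r) ` P \<union> g ` (R - P)) = UNIV" (is "?C = UNIV")
proof -
  have C: "convex_cone ?C"
    by (rule convex_cone_pos_cone)
  have C_gen: "r \<in> P \<Longrightarrow> - g r \<in> ?C" "r \<in> R - P \<Longrightarrow> g r \<in> ?C" for r
    by (auto intro: in_pos_cone)
  from alternating_witness[OF assms(2,1)] show ?thesis
  proof cases
    case (1 i j k l)
    have "x \<in> uminus ` ?C" if "- x \<in> ?C" for x
      using that by (metis image_eqI minus_minus)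
    then have neg_UNIV: "uminus ` ?C = UNIV"
      using 1 C_gen by (intro interleaved_cone_UNIV[OF 1(1-4) convex_cone_negations[OF C]]) auto
    have "x \<in> ?C" for x
    proof -
      have "- x \<in> uminus ` ?C"
        using neg_UNIV by simp
      then obtain c where "- x = - c" "c \<in> ?C"
        by blast
      then show ?thesis
        by simp
    qed
    then show ?thesis
      by blast
  next
    case (2 i j k l)
    then show ?thesis
      using C_gen by (intro interleaved_cone_UNIV[OF 2(1-4) C]) auto
  qed
qed

end

context extremal_generators
begin

theorem cones_meet_iff_disconnected:
  assumes P: "P \<subseteq> R"
  shows "(pos_cone (g ` P) \<inter> pos_cone (g ` (R - P)) \<noteq> {0} \<longleftrightarrow>
            (\<exists>a\<in>P. \<exists>b\<in>P. (a, b) \<notin> (edges_in P)\<^sup>*))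
       \<and> ((\<exists>a\<in>P. \<exists>b\<in>P. (a, b) \<notin> (edges_in P)\<^sup>*) \<longrightarrow>
            pos_cone ((\<lambda>r. - g r) ` P \<union> g ` (R - P)) = UNIV)"
proof -
  obtain e where "bij_betw e {..<card R} R"
    and "\<And>i j k. i < j \<Longrightarrow> j < k \<Longrightarrow> k < card R \<Longrightarrow> 0 < orient (e i) (e j) (e k)"
    using cyclic_enumeration by blast
  then interpret ordered_generators R g e
    by unfold_locales
  show ?thesis
  proof (cases "alternating (card R) (indices P)")
    case True
    then show ?thesis
      using alternating_cones_meet alternating_disconnected alternating_signed_cone_UNIV P by blast
  next
    case False
    then show ?thesis
      using not_alternating_cones_disjoint[OF P] not_alternating_connected[OF P] by blast
  qed
qed

end

section \<open>Rays and primitive lattice points\<close>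

lemma aff_dim_le_one_subset_span:
  fixes A :: "'a::euclidean_space set"
  assumes "0 \<in> A" "v \<in> A" "v \<noteq> 0" "aff_dim A \<le> 1"
  shows "A \<subseteq> span {v}"
proof
  fix w assume w: "w \<in> A"
  show "w \<in> span {v}"
  proof (rule ccontr)
    assume "w \<notin> span {v}"
    then have "independent {w, v}" "w \<noteq> v"
      using assms(3) by (auto simp: independent_insert span_base)
    then have "dim {w, v} = 2"
      by (simp add: dim_eq_card_independent)
    moreover have "dim {w, v} \<le> dim A"
      using w assms(2) by (intro dim_subset) auto
    moreover have "aff_dim A = int (dim A)"
      using assms(1) by (simp add: aff_dim_zero hull_inc)
    ultimately show False
      using assms(4) by linarith
  qed
qed

definition ray :: "real^3 \<Rightarrow> (real^3) set" where
  "ray v = pos_cone {v}"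

lemma mem_ray_iff: "x \<in> ray v \<longleftrightarrow> (\<exists>t\<ge>0. x = t *\<^sub>R v)"
  using mem_pos_cone_image[of "{v}" id] by (auto simp: ray_def)

lemma ray_scaleR: "0 < c \<Longrightarrow> ray (c *\<^sub>R v) = ray v"
proof (intro set_eqI iffI)
  fix x assume "0 < c" "x \<in> ray (c *\<^sub>R v)"
  then obtain t where "0 \<le> t" "x = (t * c) *\<^sub>R v"
    by (auto simp: mem_ray_iff)
  then show "x \<in> ray v"
    using \<open>0 < c\<close> by (auto simp: mem_ray_iff intro!: exI[of _ "t * c"])
next
  fix x assume "0 < c" "x \<in> ray v"
  then obtain t where "0 \<le> t" "x = t *\<^sub>R v"
    by (auto simp: mem_ray_iff)
  then show "x \<in> ray (c *\<^sub>R v)"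
    using \<open>0 < c\<close> by (auto simp: mem_ray_iff intro!: exI[of _ "t / c"])
qed

lemma aff_dim_ray: "v \<noteq> 0 \<Longrightarrow> aff_dim (ray v) = 1"
  by (simp add: ray_def aff_dim_pos_cone)

lemma pos_cone_Un_rays: "pos_cone (ray a \<union> ray b) = pos_cone {a, b}"
  unfolding ray_def pos_cone_eq_convex_cone_hull
  by (metis hull_Un_left hull_Un_right insert_is_Un)

lemma lattice_pt_diff: "lattice_pt a \<Longrightarrow> lattice_pt b \<Longrightarrow> lattice_pt (a - b)"
  unfolding lattice_pt_def by (simp add: Ints_diff)

lemma lattice_pt_scaleR_int: "lattice_pt a \<Longrightarrow> k \<in> \<int> \<Longrightarrow> lattice_pt (k *\<^sub>R a)"
  unfolding lattice_pt_def by (simp add: Ints_mult)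

lemma finite_lattice_multiples:
  assumes "s \<noteq> 0"
  shows "finite {t. 0 < t \<and> t \<le> 1 \<and> lattice_pt (t *\<^sub>R s)}"
proof -
  obtain i where i: "s $ i \<noteq> 0"
    using assms vec_eq_iff[of s 0] by auto
  define M where "M = \<bar>s $ i\<bar>"
  have "{t. 0 < t \<and> t \<le> 1 \<and> lattice_pt (t *\<^sub>R s)} \<subseteq> (\<lambda>x. x / s $ i) ` {x \<in> \<int>. - M \<le> x \<and> x \<le> M}"
  proof
    fix t assume t: "t \<in> {t. 0 < t \<and> t \<le> 1 \<and> lattice_pt (t *\<^sub>R s)}"
    then have "(t *\<^sub>R s) $ i \<in> \<int>"
      unfolding lattice_pt_def by blast
    then have "t * s $ i \<in> \<int>"
      by simp
    moreover have "\<bar>t * s $ i\<bar> \<le> M"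
      using t by (simp add: M_def abs_mult mult_left_le_one_le)
    moreover have "t = (t * s $ i) / s $ i"
      using i by simp
    ultimately show "t \<in> (\<lambda>x. x / s $ i) ` {x \<in> \<int>. - M \<le> x \<and> x \<le> M}"
      by (intro image_eqI) auto
  qed
  then show ?thesis
    using finite_int_segment finite_subset by blast
qed

lemma lattice_multiples_generated:
  assumes "lattice_pt s" "s \<noteq> 0"
  obtains c where "0 < c" "lattice_pt (c *\<^sub>R s)"
    "\<And>t. 0 < t \<Longrightarrow> lattice_pt (t *\<^sub>R s) \<Longrightarrow> \<exists>k::nat. t = real k * c"
proof -
  define L where "L = {t. 0 < t \<and> t \<le> 1 \<and> lattice_pt (t *\<^sub>R s)}"
  have fin: "finite L" and one: "1 \<in> L"
    using finite_lattice_multiples[OF assms(2)] assms(1) by (auto simp: L_def)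
  define c where "c = Min L"
  have "c \<in> L"
    unfolding c_def using fin one Min_in by blast
  then have c: "0 < c" "c \<le> 1" "lattice_pt (c *\<^sub>R s)"
    by (auto simp: L_def)
  have c_min: "c \<le> t" if "t \<in> L" for t
    unfolding c_def using fin that by simp
  have "\<exists>k::nat. t = real k * c" if t: "0 < t" "lattice_pt (t *\<^sub>R s)" for t
  proof -
    define k where "k = \<lfloor>t / c\<rfloor>"
    define r where "r = t - of_int k * c"
    have r: "0 \<le> r" "r < c"
      using c(1) floor_divide_lower[OF c(1), of t] floor_divide_upper[OF c(1), of t]
      by (simp_all add: r_def k_def algebra_simps)
    have eq: "r *\<^sub>R s = t *\<^sub>R s - of_int k *\<^sub>R (c *\<^sub>R s)"
      by (simp add: r_def algebra_simps)
    have "lattice_pt (r *\<^sub>R s)"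
      unfolding eq by (rule lattice_pt_diff[OF t(2) lattice_pt_scaleR_int[OF c(3)]]) simp
    then have "r = 0"
      using r c c_min[of r] by (force simp: L_def)
    then have "t = of_int k * c" "0 < k"
      using t(1) c(1) by (auto simp: r_def zero_less_mult_iff)
    then show ?thesis
      by (intro exI[of _ "nat k"]) simp
  qed
  then show ?thesis
    using that c by blast
qed

lemma prim_gen_eqI:
  assumes v: "v \<in> \<rho>" "lattice_pt v" "v \<noteq> 0"
    and multiples: "\<And>w. w \<in> \<rho> \<Longrightarrow> lattice_pt w \<Longrightarrow> w \<noteq> 0 \<Longrightarrow> \<exists>k::nat. w = real k *\<^sub>R v"
  shows "prim_gen \<rho> = v"
  unfolding prim_gen_def
proof (rule the_equality)
  fix v' assume v': "v' \<in> \<rho> \<and> lattice_pt v' \<and> v' \<noteq> 0 \<and>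
      (\<forall>w\<in>\<rho>. lattice_pt w \<and> w \<noteq> 0 \<longrightarrow> (\<exists>k::nat. w = real k *\<^sub>R v'))"
  then obtain k1 k2 :: nat where "v' = real k1 *\<^sub>R v" "v = real k2 *\<^sub>R v'"
    using multiples v by blast
  then have "(real k1 * real k2) *\<^sub>R v' = 1 *\<^sub>R v'"
    by simp
  then have "real k1 * real k2 = 1"
    using v' by (simp only: scaleR_cancel_right) simp
  then have "k1 = 1"
    by (metis of_nat_1 of_nat_eq_iff of_nat_mult nat_mult_eq_1_iff)
  then show "v' = v"
    using \<open>v' = real k1 *\<^sub>R v\<close> by simp
qed (use assms in blast)

lemma prim_gen_ray:
  assumes "lattice_pt s" "s \<noteq> 0"
  obtains c where "0 < c" "prim_gen (ray s) = c *\<^sub>R s"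
proof -
  obtain c where c: "0 < c" "lattice_pt (c *\<^sub>R s)"
    and gen: "\<And>t. 0 < t \<Longrightarrow> lattice_pt (t *\<^sub>R s) \<Longrightarrow> \<exists>k::nat. t = real k * c"
    using lattice_multiples_generated[OF assms] by blast
  have "prim_gen (ray s) = c *\<^sub>R s"
  proof (rule prim_gen_eqI)
    show "c *\<^sub>R s \<in> ray s" "lattice_pt (c *\<^sub>R s)" "c *\<^sub>R s \<noteq> 0"
      using c assms(2) by (auto simp: mem_ray_iff intro!: exI[of _ c])
    fix w assume w: "w \<in> ray s" "lattice_pt w" "w \<noteq> 0"
    then obtain t where t: "0 < t" "w = t *\<^sub>R s"
      by (auto simp: mem_ray_iff order_le_less)
    then obtain k :: nat where "t = real k * c"
      using gen w(2) by blast
    then show "\<exists>k::nat. w = real k *\<^sub>R (c *\<^sub>R s)"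
      using t by auto
  qed
  then show ?thesis
    using c(1) that by blast
qed

section \<open>Irredundant lattice generators\<close>

locale irredundant_lattice_generators =
  fixes S :: "(real^3) set"
  assumes finite_S: "finite S"
    and lattice_S: "\<And>s. s \<in> S \<Longrightarrow> lattice_pt s"
    and irredundant: "\<And>s. s \<in> S \<Longrightarrow> s \<notin> pos_cone (S - {s})"
    and pointed_S: "pos_cone S \<inter> uminus ` pos_cone S = {0}"
begin

sublocale gens: extremal_generators S id
proof
  show "finite S"
    by (rule finite_S)
  show "x = 0" if "x \<in> pos_cone (id ` S)" "- x \<in> pos_cone (id ` S)" for x
  proof -
    have "x \<in> uminus ` pos_cone S"
      by (rule image_eqI[of x uminus "- x"]) (use that in auto)
    then show ?thesis
      using that(1) pointed_S by auto
  qed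
  show "id s \<notin> pos_cone (id ` (S - {s}))" if "s \<in> S" for s
    using irredundant that by simp
qed

lemma ray_absorbs_summand:
  assumes s: "s \<in> S" and yz: "y \<in> pos_cone S" "z \<in> pos_cone S" "y + z \<in> ray s"
  shows "y \<in> ray s"
proof -
  obtain t where t: "y + z = t *\<^sub>R s"
    using yz(3) by (auto simp: mem_ray_iff)
  obtain c1 w1 where 1: "0 \<le> c1" "w1 \<in> pos_cone (S - {s})" "y = c1 *\<^sub>R s + w1"
    by (rule pos_cone_split[OF finite_S s yz(1)])
  obtain c2 w2 where 2: "w2 \<in> pos_cone (S - {s})" "z = c2 *\<^sub>R s + w2"
    by (rule pos_cone_split[OF finite_S s yz(2)])
  have "(t - c1 - c2) *\<^sub>R s = w1 + w2"
    using t unfolding 1(3) 2(2) by (simp add: algebra_simps)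
  moreover have "w1 + w2 \<in> pos_cone (S - {s})"
    using 1(2) 2(1) by (rule pos_cone_add)
  ultimately have "- w1 = w2"
    using gens.multiple_of_gen_in_cone_of_others[OF s, of "w1 + w2" "t - c1 - c2"]
    by (simp add: add_eq_0_iff)
  moreover have "w1 \<in> pos_cone S" "w2 \<in> pos_cone S"
    using 1(2) 2(1) pos_cone_mono[of "S - {s}" S] by auto
  ultimately have "w1 = 0"
    by (intro gens.pointed) simp_all
  then show ?thesis
    using 1 by (auto simp: mem_ray_iff)
qed

lemma ray_face_of:
  assumes s: "s \<in> S"
  shows "ray s face_of pos_cone S"
proof -
  have scale_back: "a \<in> ray s" if "u *\<^sub>R a \<in> ray s" "0 < u" for a u
    using pos_cone_scaleR[OF that(1)[unfolded ray_def], of "1 / u"] that(2) by (simp add: ray_def)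
  have segment: "a \<in> ray s \<and> b \<in> ray s"
    if ab: "a \<in> pos_cone S" "b \<in> pos_cone S" and x: "x \<in> ray s" "x \<in> open_segment a b" for a b x
  proof -
    obtain u where u: "0 < u" "u < 1" "x = (1 - u) *\<^sub>R a + u *\<^sub>R b"
      using x(2) by (auto simp: in_segment)
    have a': "(1 - u) *\<^sub>R a \<in> pos_cone S" and b': "u *\<^sub>R b \<in> pos_cone S"
      using ab u by (auto intro: pos_cone_scaleR)
    have "(1 - u) *\<^sub>R a \<in> ray s"
      using ray_absorbs_summand[OF s a' b'] x(1) u(3) by simp
    moreover have "u *\<^sub>R b \<in> ray s"
      using ray_absorbs_summand[OF s b' a'] x(1) u(3) by (simp add: add.commute)
    ultimately show ?thesis
      using u scale_back[of "1 - u" a] scale_back[of u b] by simp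
  qed
  have "ray s \<subseteq> pos_cone S"
    unfolding ray_def using s by (intro pos_cone_minimal) (auto intro: in_pos_cone)
  moreover have "convex (ray s)"
    by (simp add: ray_def convex_pos_cone)
  ultimately show ?thesis
    unfolding face_of_def using segment by blast
qed

lemma face_dim_one_eq_ray:
  assumes F: "\<rho> face_of pos_cone S" and dim: "aff_dim \<rho> = 1" and v: "v \<in> S" "v \<in> \<rho>"
  shows "\<rho> = ray v"
proof
  show ray_sub: "ray v \<subseteq> \<rho>"
    using face_of_convex_cone_scaleR[OF convex_cone_pos_cone F v(2)] by (auto simp: mem_ray_iff)
  show "\<rho> \<subseteq> ray v"
  proof
    fix w assume w: "w \<in> \<rho>"
    have "0 \<in> \<rho>"
      using ray_sub zero_in_pos_cone by (auto simp: ray_def)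
    then have "w \<in> span {v}"
      using aff_dim_le_one_subset_span[OF _ v(2)] gens.gen_nonzero[OF v(1)] dim w by auto
    then obtain k where k: "w = k *\<^sub>R v"
      by (auto simp: span_singleton)
    show "w \<in> ray v"
    proof (cases "0 \<le> k")
      case True
      then show ?thesis
        using k by (auto simp: mem_ray_iff)
    next
      case False
      have "w \<in> pos_cone S"
        using w F face_of_imp_subset by blast
      moreover have "- w \<in> pos_cone S"
        using k False v(1) by (simp add: scaleR_in_pos_cone flip: scaleR_minus_left)
      ultimately have "w = 0"
        by (intro gens.pointed) simp_all
      then show ?thesis
        by (auto simp: mem_ray_iff)
    qed
  qed
qed

lemma rays_eq: "rays (pos_cone S) = ray ` S"
proof
  show "ray ` S \<subseteq> rays (pos_cone S)"
    using ray_face_of aff_dim_ray gens.gen_nonzero by (auto simp: rays_def)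
  show "rays (pos_cone S) \<subseteq> ray ` S"
  proof
    fix \<rho> assume "\<rho> \<in> rays (pos_cone S)"
    then have F: "\<rho> face_of pos_cone S" and dim: "aff_dim \<rho> = 1"
      by (auto simp: rays_def)
    have "\<rho> \<noteq> {}" "\<rho> \<noteq> {0}"
      using dim by auto
    then obtain x where "x \<in> \<rho>" "x \<noteq> 0"
      by blast
    then obtain v where "v \<in> S" "v \<in> \<rho>"
      using face_of_pos_cone_contains_generator[OF finite_S F] by blast
    then show "\<rho> \<in> ray ` S"
      using face_dim_one_eq_ray[OF F dim] by blast
  qed
qed

lemma prim_gen_ray_gen:
  assumes "s \<in> S"
  obtains c where "0 < c" "prim_gen (ray s) = c *\<^sub>R s"
  using prim_gen_ray[OF lattice_S[OF assms]] gens.gen_nonzero[OF assms] by auto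

lemma prim_gen_ray_mem:
  assumes "s \<in> S" "s \<in> T"
  shows "prim_gen (ray s) \<in> pos_cone T"
proof -
  obtain c where "0 < c" "prim_gen (ray s) = c *\<^sub>R s"
    by (rule prim_gen_ray_gen[OF assms(1)])
  then show ?thesis
    using assms(2) by (simp add: scaleR_in_pos_cone)
qed

lemma ray_prim_gen:
  assumes "\<rho> \<in> rays (pos_cone S)"
  shows "ray (prim_gen \<rho>) = \<rho>"
proof -
  obtain s where s: "s \<in> S" "\<rho> = ray s"
    using assms by (auto simp: rays_eq)
  obtain c where "0 < c" "prim_gen (ray s) = c *\<^sub>R s"
    by (rule prim_gen_ray_gen[OF s(1)])
  then show ?thesis
    using s(2) by (simp add: ray_scaleR)
qed

lemma pos_cone_prim_gens: "pos_cone (prim_gen ` rays (pos_cone S)) = pos_cone S"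
proof
  show "pos_cone (prim_gen ` rays (pos_cone S)) \<subseteq> pos_cone S"
    by (intro pos_cone_minimal) (auto simp: rays_eq prim_gen_ray_mem)
  have "s \<in> pos_cone (prim_gen ` rays (pos_cone S))" if s: "s \<in> S" for s
  proof -
    obtain c where c: "0 < c" "prim_gen (ray s) = c *\<^sub>R s"
      using prim_gen_ray_gen[OF s] by blast
    have "(1 / c) *\<^sub>R prim_gen (ray s) \<in> pos_cone (prim_gen ` rays (pos_cone S))"
      using s c(1) by (intro scaleR_in_pos_cone) (auto simp: rays_eq)
    then show ?thesis
      using c by simp
  qed
  then show "pos_cone S \<subseteq> pos_cone (prim_gen ` rays (pos_cone S))"
    by (intro pos_cone_minimal) auto
qed

lemma extremal_generators_prim_gen: "extremal_generators (rays (pos_cone S)) prim_gen"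
proof
  show "finite (rays (pos_cone S))"
    by (simp add: rays_eq finite_S)
  show "x = 0" if "x \<in> pos_cone (prim_gen ` rays (pos_cone S))"
    "- x \<in> pos_cone (prim_gen ` rays (pos_cone S))" for x
    using that by (intro gens.pointed) (simp_all add: pos_cone_prim_gens)
  show "prim_gen \<rho> \<notin> pos_cone (prim_gen ` (rays (pos_cone S) - {\<rho>}))"
    if \<rho>: "\<rho> \<in> rays (pos_cone S)" for \<rho>
  proof
    assume in_others: "prim_gen \<rho> \<in> pos_cone (prim_gen ` (rays (pos_cone S) - {\<rho>}))"
    obtain s where s: "s \<in> S" "\<rho> = ray s"
      using \<rho> rays_eq by blast
    obtain c where c: "0 < c" "prim_gen (ray s) = c *\<^sub>R s"
      by (rule prim_gen_ray_gen[OF s(1)])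
    have "prim_gen ` (rays (pos_cone S) - {\<rho>}) \<subseteq> pos_cone (S - {s})"
    proof
      fix x assume "x \<in> prim_gen ` (rays (pos_cone S) - {\<rho>})"
      then obtain s' where "s' \<in> S" "s' \<noteq> s" "x = prim_gen (ray s')"
        unfolding rays_eq s(2) by blast
      then show "x \<in> pos_cone (S - {s})"
        using prim_gen_ray_mem[of s' "S - {s}"] by blast
    qed
    then have "prim_gen \<rho> \<in> pos_cone (S - {s})"
      using pos_cone_minimal in_others by blast
    then have "c *\<^sub>R s \<in> pos_cone (S - {s})"
      using c(2) s(2) by simp
    then have "c = 0"
      using gens.multiple_of_gen_in_cone_of_others[OF s(1), of "c *\<^sub>R s" c] by simp
    then show False
      using c(1) by simp
  qed
qed

sublocale ray_gens: extremal_generators "rays (pos_cone S)" prim_gen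
  by (rule extremal_generators_prim_gen)

lemma adjacent_rays_iff_edge:
  assumes "x \<in> rays (pos_cone S)" "y \<in> rays (pos_cone S)"
  shows "adjacent_rays (pos_cone S) x y \<longleftrightarrow> ray_gens.edge x y"
proof -
  have "pos_cone (x \<union> y) = pos_cone (prim_gen ` {x, y})"
    using pos_cone_Un_rays[of "prim_gen x" "prim_gen y"] ray_prim_gen assms by simp
  then show ?thesis
    unfolding adjacent_rays_def ray_gens.edge_def
    using assms ray_gens.aff_dim_gen_pair pos_cone_prim_gens by auto
qed

lemma more_than_one_interval_iff:
  assumes "P \<subseteq> rays (pos_cone S)"
  shows "more_than_one_interval (pos_cone S) P \<longleftrightarrow> (\<exists>a\<in>P. \<exists>b\<in>P. (a, b) \<notin> (ray_gens.edges_in P)\<^sup>*)"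
proof -
  have "{(x, y). x \<in> P \<and> y \<in> P \<and> adjacent_rays (pos_cone S) x y} = ray_gens.edges_in P"
    using adjacent_rays_iff_edge assms by (auto simp: ray_gens.edges_in_def)
  then show ?thesis
    by (simp add: more_than_one_interval_def)
qed

end

theorem mainTheorem9:
  fixes \<sigma> :: "(real^3) set" and P :: "(real^3) set set"
  assumes "full_sc_rat_poly_cone \<sigma>"
    and "P \<subseteq> rays \<sigma>"
  shows "(sigma1 \<sigma> P \<inter> sigma2 \<sigma> P \<noteq> {0} \<longleftrightarrow> more_than_one_interval \<sigma> P)
       \<and> (more_than_one_interval \<sigma> P \<longrightarrow> sigmaPi \<sigma> P = UNIV)"
proof -
  obtain S0 where S0: "finite S0" "\<forall>v\<in>S0. lattice_pt v" "\<sigma> = pos_cone S0"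
    and pointed: "\<sigma> \<inter> uminus ` \<sigma> = {0}"
    using assms(1) unfolding full_sc_rat_poly_cone_def by blast
  obtain S where S: "S \<subseteq> S0" "pos_cone S = \<sigma>" "\<And>s. s \<in> S \<Longrightarrow> s \<notin> pos_cone (S - {s})"
    using exists_irredundant_subset[OF S0(1)] S0(3) by metis
  interpret irredundant_lattice_generators S
    using S S0 pointed finite_subset by unfold_locales auto
  show ?thesis
    using ray_gens.cones_meet_iff_disconnected more_than_one_interval_iff assms(2)
    unfolding sigma1_def sigma2_def sigmaPi_def S(2)[symmetric] by simp
qed

end
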